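(* Let $k\ge 3$ be an odd integer and let $\bm\delta=(1,\dots,1)$ (of length $k$). Then \[C^3_k(n)=\Omega\left(\max\left\{\frac{u_3(n)^k}{n^{k-1}},\; us_3(n)\,n^{(k-1)/2}\right\}\right).\]
   Context: For $\bm\delta=(\delta_1,\dots,\delta_k)$, a $(k+1)$-tuple $(p_1,\dots,p_{k+1})$ of pairwise distinct points of $\mathbb{R}^3$ is a $k$-chain if $\|p_j-p_{j+1}\|=\delta_j$ for all $1\le j\le k$; $C^3_k(n)$ is the maximum number of $k$-chains spanned by a set of $n$ points in $\mathbb{R}^3$. $u_3(n)$ is the maximum number of pairs of points at distance exactly $1$ in a set of $n$ points in $\mathbb{R}^3$. $us_3(n)$ is the maximum, over sets $X$ of $n$ points in $\mathbb{R}^3$ and sets $Y$ of $n$ points lying on a sphere in $\mathbb{R}^3$, of the number of pairs $(x,y)\in X\times Y$ with $\|x-y\|=1$. *)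

theory Defs
  imports "HOL-Analysis.Analysis" "HOL-Library.Landau_Symbols"
begin

type_synonym pt3 = "real ^ 3"

definition unit_chains :: "nat \<Rightarrow> pt3 set \<Rightarrow> nat" where
  "unit_chains k P = card {ps. length ps = k + 1 \<and> set ps \<subseteq> P \<and> distinct ps \<and>
       (\<forall>j<k. dist (ps ! j) (ps ! (j + 1)) = 1)}"

definition C3 :: "nat \<Rightarrow> nat \<Rightarrow> nat" where
  "C3 k n = Sup {unit_chains k P | P. finite P \<and> card P = n}"

definition unit_pairs :: "pt3 set \<Rightarrow> nat" where
  "unit_pairs P = card {{p, q} | p q. p \<in> P \<and> q \<in> P \<and> dist p q = 1}"

definition u3 :: "nat \<Rightarrow> nat" where
  "u3 n = Sup {unit_pairs P | P. finite P \<and> card P = n}"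

definition bip_unit_pairs :: "pt3 set \<Rightarrow> pt3 set \<Rightarrow> nat" where
  "bip_unit_pairs X Y = card {(x, y). x \<in> X \<and> y \<in> Y \<and> dist x y = 1}"

definition us3 :: "nat \<Rightarrow> nat" where
  "us3 n = Sup {bip_unit_pairs X Y | X Y. finite X \<and> card X = n \<and> finite Y \<and> card Y = n \<and>
      (\<exists>c r. r > 0 \<and> Y \<subseteq> sphere c r)}"

end

theory Submission
  imports Defs "HOL-Library.Quadratic_Discriminant" "HOL-Computational_Algebra.Polynomial"
begin

text \<open>
  \<^item> Let \<open>P\<close> have \<open>n\<close> points and \<open>E\<close> ordered unit pairs. If \<open>E \<ge> 8 k n\<close>, deleting points of
    degree below \<open>d = E / (4 n)\<close> one at a time keeps half of the pairs and leaves minimum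
    degree \<open>d \<ge> 2 k\<close>, where every chain extends in at least \<open>d - k\<close> ways; this gives
    \<open>E (d / 2)\<^bsup>k - 1\<^esup> / 2\<close> chains. If \<open>E < 8 k n\<close>, the bound is \<open>O(n)\<close>, and \<open>n\<close> collinear points at
    unit spacing suffice.
  \<^item> Let \<open>k = 2 l + 1\<close> and let \<open>Y\<close> lie on a sphere. First move the incidences to \<open>Y\<close> on the
    unit sphere around \<open>0\<close> (losing a factor \<open>8\<close>) and keep \<open>m \<approx> n / (l + 4)\<close> points on each side.
    Put hubs \<open>a\<^sub>i = i h e\<^sub>1\<close> on a line through \<open>a\<^sub>0 = 0\<close>, and \<open>m\<close> points on each circle of points
    at unit distance from both \<open>a\<^sub>i\<^sub>-\<^sub>1\<close> and \<open>a\<^sub>i\<close>. Every incidence \<open>(x, y)\<close> then extends to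
    \<open>m\<^sup>l\<close> chains \<open>x, y, a\<^sub>0, z\<^sub>1, a\<^sub>1, \<dots>, a\<^sub>l\<^sub>-\<^sub>1, z\<^sub>l\<close>.
\<close>

fun unit_path :: "'a::metric_space list \<Rightarrow> bool" where
  "unit_path (a # b # r) \<longleftrightarrow> dist a b = 1 \<and> unit_path (b # r)"
| "unit_path _ \<longleftrightarrow> True"

lemma unit_path_iff_nth:
  "unit_path ps \<longleftrightarrow> (\<forall>j. j + 1 < length ps \<longrightarrow> dist (ps ! j) (ps ! (j + 1)) = 1)"
proof (induction ps rule: unit_path.induct)
  case (1 a b r)
  have step: "(\<forall>j. j + 1 < length (a # b # r) \<longrightarrow> dist ((a # b # r) ! j) ((a # b # r) ! (j + 1)) = 1)
    \<longleftrightarrow> dist a b = 1 \<and> (\<forall>j. j + 1 < length (b # r) \<longrightarrow> dist ((b # r) ! j) ((b # r) ! (j + 1)) = 1)"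
    by (auto simp: nth_Cons split: nat.splits)
  show ?case unfolding unit_path.simps(1) "1" by (rule step[symmetric])
qed auto

lemma unit_path_append:
  "unit_path (xs @ ys) \<longleftrightarrow>
     unit_path xs \<and> unit_path ys \<and> (xs \<noteq> [] \<longrightarrow> ys \<noteq> [] \<longrightarrow> dist (last xs) (hd ys) = 1)"
proof (induction xs)
  case (Cons a xs)
  show ?case
  proof (cases xs)
    case Nil
    then show ?thesis by (cases ys) auto
  next
    case (Cons b r)
    then show ?thesis using Cons.IH by auto
  qed
qed simp

definition unit_chain_set :: "nat \<Rightarrow> 'a::metric_space set \<Rightarrow> 'a list set" where
  "unit_chain_set k P = {ps. length ps = k + 1 \<and> set ps \<subseteq> P \<and> distinct ps \<and> unit_path ps}"

lemma unit_chains_eq_card: "unit_chains k P = card (unit_chain_set k P)"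
proof -
  have "(\<forall>j<k. dist (ps ! j) (ps ! (j + 1)) = 1) \<longleftrightarrow> unit_path ps" if "length ps = k + 1" for ps :: "pt3 list"
    unfolding unit_path_iff_nth using that by simp
  then show ?thesis
    unfolding unit_chains_def unit_chain_set_def by (intro arg_cong[where f = card] Collect_cong) blast
qed

lemma finite_unit_chain_set: "finite P \<Longrightarrow> finite (unit_chain_set k P)"
  by (rule finite_subset[OF _ finite_lists_length_eq[of P "k + 1"]]) (auto simp: unit_chain_set_def)

lemma unit_chain_set_mono: "P \<subseteq> Q \<Longrightarrow> unit_chain_set k P \<subseteq> unit_chain_set k Q"
  unfolding unit_chain_set_def by auto

lemma card_unit_chain_set_mono:
  "finite Q \<Longrightarrow> P \<subseteq> Q \<Longrightarrow> card (unit_chain_set k P) \<le> card (unit_chain_set k Q)"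
  by (rule card_mono[OF finite_unit_chain_set unit_chain_set_mono])

lemma exists_finite_superset_card:
  assumes "infinite (UNIV :: 'a set)" "finite (P :: 'a set)" "card P \<le> n"
  obtains Q where "finite Q" "card Q = n" "P \<subseteq> Q"
proof -
  have "infinite (UNIV - P)" using assms(1,2) by (simp add: Diff_infinite_finite)
  then obtain R where R: "finite R" "card R = n - card P" "R \<subseteq> UNIV - P"
    using infinite_arbitrarily_large by blast
  have "card (P \<union> R) = n" using R assms by (subst card_Un_disjoint) auto
  with R assms show thesis by (intro that[of "P \<union> R"]) auto
qed

lemma infinite_UNIV_pt3: "infinite (UNIV :: pt3 set)"
  by (intro infinite_UNIV_vec) (simp add: infinite_UNIV_char_0)

lemma Sup_nat_mem_bounded:
  fixes S :: "nat set"
  assumes "S \<noteq> {}" "\<And>x. x \<in> S \<Longrightarrow> x \<le> b"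
  shows "Sup S \<in> S"
proof -
  have "finite S" using assms(2) finite_nat_set_iff_bounded_le by blast
  then show ?thesis using assms(1) by (simp add: cSup_eq_Max)
qed

lemma unit_chains_le_C3:
  assumes "finite P" "card P \<le> n"
  shows "unit_chains k P \<le> C3 k n"
proof -
  obtain Q where Q: "finite Q" "card Q = n" "P \<subseteq> Q"
    using exists_finite_superset_card[OF infinite_UNIV_pt3 assms] .
  have "unit_chains k Q' \<le> n ^ (k + 1)" if "finite Q'" "card Q' = n" for Q' :: "pt3 set"
  proof -
    have "unit_chain_set k Q' \<subseteq> {ps. set ps \<subseteq> Q' \<and> length ps = k + 1}"
      unfolding unit_chain_set_def by auto
    from card_mono[OF finite_lists_length_eq[OF that(1)] this] that
    show ?thesis by (simp add: unit_chains_eq_card card_lists_length_eq)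
  qed
  then have bdd: "bdd_above {unit_chains k P | P. finite P \<and> card P = n}"
    by (intro bdd_aboveI[where M = "n ^ (k + 1)"]) blast
  have "unit_chains k P \<le> unit_chains k Q"
    unfolding unit_chains_eq_card by (rule card_unit_chain_set_mono[OF Q(1,3)])
  also have "\<dots> \<le> C3 k n"
    unfolding C3_def by (rule cSup_upper[OF _ bdd]) (use Q in blast)
  finally show ?thesis .
qed

lemma u3_attained:
  obtains P where "finite P" "card P = n" "unit_pairs P = u3 n"
proof -
  obtain P :: "pt3 set" where "finite P" "card P = n"
    using exists_finite_superset_card[OF infinite_UNIV_pt3, of "{}" n] by auto
  then have ne: "{unit_pairs P | P. finite P \<and> card P = n} \<noteq> {}" by blast
  have bound: "unit_pairs P \<le> 2 ^ n" if "finite P" "card P = n" for P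
  proof -
    have "unit_pairs P \<le> card (Pow P)"
      unfolding unit_pairs_def using that by (intro card_mono) auto
    then show ?thesis using that by (simp add: card_Pow)
  qed
  have "u3 n \<in> {unit_pairs P | P. finite P \<and> card P = n}"
    unfolding u3_def by (rule Sup_nat_mem_bounded[OF ne, where b = "2 ^ n"]) (use bound in blast)
  then obtain Q where "u3 n = unit_pairs Q" "finite Q" "card Q = n" by blast
  then show thesis by (intro that) simp_all
qed

lemma us3_attained:
  assumes "us3 n \<noteq> 0"
  obtains X Y c r where "finite X" "card X = n" "finite Y" "card Y = n" "r > 0"
    "Y \<subseteq> sphere c r" "bip_unit_pairs X Y = us3 n"
proof -
  define S where "S = {bip_unit_pairs X Y | X Y. finite X \<and> card X = n \<and> finite Y \<and> card Y = n \<and>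
      (\<exists>c r. r > 0 \<and> Y \<subseteq> sphere c r)}"
  have "S \<noteq> {}" using assms unfolding us3_def S_def[symmetric] by (metis Sup_nat_empty)
  moreover have "x \<le> n * n" if "x \<in> S" for x
  proof -
    obtain X Y where "x = bip_unit_pairs X Y" "finite X" "card X = n" "finite Y" "card Y = n"
      using \<open>x \<in> S\<close> unfolding S_def by blast
    moreover have "bip_unit_pairs X Y \<le> card (X \<times> Y)"
      unfolding bip_unit_pairs_def using calculation by (intro card_mono) auto
    ultimately show ?thesis by (simp add: card_cartesian_product)
  qed
  ultimately have "us3 n \<in> S" unfolding us3_def S_def[symmetric] by (rule Sup_nat_mem_bounded)
  then obtain X Y c r where "us3 n = bip_unit_pairs X Y" "finite X" "card X = n" "finite Y"
    "card Y = n" "r > 0" "Y \<subseteq> sphere c r"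
    unfolding S_def by blast
  then show thesis by (intro that) simp_all
qed

section \<open>Long chains in graphs of large minimum degree\<close>

definition unit_nbrs :: "'a::metric_space set \<Rightarrow> 'a \<Rightarrow> 'a set" where
  "unit_nbrs Q v = {w \<in> Q. dist v w = 1}"

definition unit_arcs :: "'a::metric_space set \<Rightarrow> ('a \<times> 'a) set" where
  "unit_arcs Q = {(p, q). p \<in> Q \<and> q \<in> Q \<and> dist p q = 1}"

lemma not_in_unit_nbrs: "v \<notin> unit_nbrs Q v"
  unfolding unit_nbrs_def by simp

lemma finite_unit_nbrs: "finite Q \<Longrightarrow> finite (unit_nbrs Q v)"
  unfolding unit_nbrs_def by simp

lemma finite_unit_arcs: "finite Q \<Longrightarrow> finite (unit_arcs Q)"
  by (rule finite_subset[of _ "Q \<times> Q"]) (auto simp: unit_arcs_def)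

lemma card_unit_arcs_remove:
  assumes "finite Q" "v \<in> Q"
  shows "card (unit_arcs Q) = card (unit_arcs (Q - {v})) + 2 * card (unit_nbrs Q v)"
proof -
  define Out where "Out = Pair v ` unit_nbrs Q v"
  define In where "In = (\<lambda>w. (w, v)) ` unit_nbrs Q v"
  have split: "unit_arcs Q = unit_arcs (Q - {v}) \<union> (Out \<union> In)"
    unfolding unit_arcs_def unit_nbrs_def Out_def In_def using assms(2) by (auto simp: dist_commute)
  have "Out \<inter> In = {}" "unit_arcs (Q - {v}) \<inter> (Out \<union> In) = {}"
    unfolding Out_def In_def unit_arcs_def using not_in_unit_nbrs by auto
  moreover have "card Out = card (unit_nbrs Q v)" "card In = card (unit_nbrs Q v)"
    unfolding Out_def In_def by (auto intro: card_image simp: inj_on_def)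
  moreover have "finite Out" "finite In" "finite (unit_arcs (Q - {v}))"
    unfolding Out_def In_def using assms(1) by (simp_all add: finite_unit_nbrs finite_unit_arcs)
  ultimately show ?thesis unfolding split by (simp add: card_Un_disjoint)
qed

text \<open>Deleting vertices of degree below \<open>d\<close> one by one costs fewer than \<open>2 d\<close> arcs per vertex.\<close>

lemma exists_min_degree_subset:
  fixes d :: real
  assumes "d \<ge> 0" "finite Q"
  obtains R where "R \<subseteq> Q" "real (card (unit_arcs R)) \<ge> real (card (unit_arcs Q)) - 2 * d * card Q"
    "\<forall>v\<in>R. real (card (unit_nbrs R v)) \<ge> d"
  using assms(2)
proof (induction "card Q" arbitrary: Q thesis rule: less_induct)
  case less
  show ?case
  proof (cases "\<forall>v\<in>Q. real (card (unit_nbrs Q v)) \<ge> d")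
    case True
    then show ?thesis using assms(1) by (intro less.prems(1)[of Q]) auto
  next
    case False
    then obtain v where v: "v \<in> Q" "real (card (unit_nbrs Q v)) < d" by force
    have "card (Q - {v}) < card Q" by (rule card_Diff1_less[OF less.prems(2) v(1)])
    then obtain R where R: "R \<subseteq> Q - {v}"
      "real (card (unit_arcs R)) \<ge> real (card (unit_arcs (Q - {v}))) - 2 * d * card (Q - {v})"
      "\<forall>w\<in>R. real (card (unit_nbrs R w)) \<ge> d"
      using less.hyps less.prems(2) by (metis finite_Diff)
    have "card Q > 0" using less.prems(2) v(1) card_gt_0_iff by blast
    then have card_Q: "real (card (Q - {v})) = real (card Q) - 1"
      using v(1) by (simp add: of_nat_diff)
    have "real (card (unit_arcs R)) \<ge> real (card (unit_arcs (Q - {v}))) - 2 * d * card Q + 2 * d"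
      using R(2) unfolding card_Q by (simp add: algebra_simps)
    moreover have "card (unit_arcs Q) = card (unit_arcs (Q - {v})) + 2 * card (unit_nbrs Q v)"
      by (rule card_unit_arcs_remove[OF less.prems(2) v(1)])
    ultimately have "real (card (unit_arcs R)) \<ge> real (card (unit_arcs Q)) - 2 * d * card Q"
      using v(2) by simp
    then show ?thesis using R by (intro less.prems(1)[of R]) auto
  qed
qed

lemma card_unit_chain_set_1: "card (unit_chain_set 1 Q) = card (unit_arcs Q)"
proof -
  have "unit_chain_set 1 Q = (\<lambda>(p, q). [p, q]) ` unit_arcs Q"
  proof (intro set_eqI iffI)
    fix ps assume ps: "ps \<in> unit_chain_set 1 Q"
    then obtain p q where "ps = [p, q]"
      unfolding unit_chain_set_def by (auto simp: length_Suc_conv numeral_2_eq_2)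
    with ps show "ps \<in> (\<lambda>(p, q). [p, q]) ` unit_arcs Q"
      unfolding unit_chain_set_def unit_arcs_def by auto
  qed (auto simp: unit_chain_set_def unit_arcs_def)
  moreover have "inj_on (\<lambda>(p, q). [p, q]) (unit_arcs Q)" by (auto simp: inj_on_def)
  ultimately show ?thesis by (simp add: card_image)
qed

text \<open>A chain ending at \<open>v\<close> extends through every neighbour of \<open>v\<close> not already on it.\<close>

lemma card_unit_chain_set_Suc_ge:
  fixes d :: real
  assumes fin: "finite Q" and deg: "\<forall>v\<in>Q. real (card (unit_nbrs Q v)) \<ge> d"
  shows "(d - j) * card (unit_chain_set j Q) \<le> card (unit_chain_set (Suc j) Q)"
proof -
  define ext where "ext ps = (\<lambda>w. ps @ [w]) ` (unit_nbrs Q (last ps) - set ps)" for ps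
  have ext_sub: "ext ps \<subseteq> unit_chain_set (Suc j) Q" if ps: "ps \<in> unit_chain_set j Q" for ps
  proof
    fix xs assume "xs \<in> ext ps"
    then obtain w where w: "w \<in> unit_nbrs Q (last ps)" "w \<notin> set ps" "xs = ps @ [w]"
      unfolding ext_def by auto
    have "ps \<noteq> []" using ps unfolding unit_chain_set_def by auto
    with ps w show "xs \<in> unit_chain_set (Suc j) Q"
      unfolding unit_chain_set_def unit_nbrs_def by (auto simp: unit_path_append)
  qed
  have card_ext: "d - j \<le> card (ext ps)" if ps: "ps \<in> unit_chain_set j Q" for ps
  proof -
    have ps': "length ps = j + 1" "set ps \<subseteq> Q" "distinct ps"
      using ps unfolding unit_chain_set_def by auto
    then have last: "last ps \<in> set ps" by (intro last_in_set) auto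
    have "card (ext ps) = card (unit_nbrs Q (last ps) - (set ps - {last ps}))"
      unfolding ext_def using not_in_unit_nbrs
      by (subst card_image) (auto simp: inj_on_def intro!: arg_cong[where f = card])
    also have "\<dots> \<ge> card (unit_nbrs Q (last ps)) - card (set ps - {last ps})"
      by (rule diff_card_le_card_Diff) simp
    finally have "card (unit_nbrs Q (last ps)) - j \<le> card (ext ps)"
      using last ps' by (simp add: distinct_card)
    then show ?thesis using deg last ps' by force
  qed
  have "(d - j) * card (unit_chain_set j Q) = (\<Sum>ps\<in>unit_chain_set j Q. d - j)" by simp
  also have "\<dots> \<le> (\<Sum>ps\<in>unit_chain_set j Q. real (card (ext ps)))"
    by (rule sum_mono) (rule card_ext)
  also have "\<dots> = card (\<Union>ps\<in>unit_chain_set j Q. ext ps)"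
    unfolding ext_def using fin
    by (subst card_UN_disjoint) (auto simp: finite_unit_chain_set finite_unit_nbrs)
  also have "\<dots> \<le> card (unit_chain_set (Suc j) Q)"
    unfolding of_nat_le_iff using ext_sub by (intro card_mono finite_unit_chain_set fin) auto
  finally show ?thesis by simp
qed

lemma card_unit_chain_set_ge_min_degree:
  fixes d :: real
  assumes fin: "finite Q" and deg: "\<forall>v\<in>Q. real (card (unit_nbrs Q v)) \<ge> d"
    and "d \<ge> k" "1 \<le> j" "j \<le> k"
  shows "card (unit_arcs Q) * (d - k) ^ (j - 1) \<le> card (unit_chain_set j Q)"
  using assms(4,5)
proof (induction j rule: dec_induct)
  case base
  then show ?case using card_unit_chain_set_1[of Q] by simp
next
  case (step j)
  then have IH: "card (unit_arcs Q) * (d - k) ^ (j - 1) \<le> card (unit_chain_set j Q)" by simp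
  have "card (unit_arcs Q) * (d - k) ^ (Suc j - 1) = card (unit_arcs Q) * (d - k) ^ (j - 1) * (d - k)"
    using step.hyps by (cases j) auto
  also have "\<dots> \<le> card (unit_chain_set j Q) * (d - j)"
    using IH step.prems \<open>d \<ge> k\<close> by (intro mult_mono) auto
  also have "\<dots> \<le> card (unit_chain_set (Suc j) Q)"
    using card_unit_chain_set_Suc_ge[OF fin deg, of j] by (simp add: mult.commute)
  finally show ?case .
qed

lemma card_unit_chain_set_ge_arcs_power:
  assumes fin: "finite P" and ne: "P \<noteq> {}" and k: "k \<ge> 1"
    and dense: "8 * k * card P \<le> card (unit_arcs P)"
  shows "real (card (unit_arcs P)) ^ k / (2 * (8 * card P) ^ (k - 1)) \<le> card (unit_chain_set k P)"
proof -
  define S where "S = real (card (unit_arcs P))"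
  define N where "N = real (card P)"
  define d where "d = S / (4 * N)"
  have N: "N > 0" unfolding N_def using fin ne by (simp add: card_gt_0_iff)
  have "real (8 * k * card P) \<le> S" using dense unfolding S_def of_nat_le_iff .
  then have d: "d \<ge> 2 * k" unfolding d_def using N by (simp add: field_simps N_def)
  obtain R where R: "R \<subseteq> P" "real (card (unit_arcs R)) \<ge> S - 2 * d * N"
    "\<forall>v\<in>R. real (card (unit_nbrs R v)) \<ge> d"
    using exists_min_degree_subset[of d P] d fin unfolding S_def N_def by auto
  have fin_R: "finite R" using R(1) fin by (rule finite_subset)
  have "S / 2 \<le> real (card (unit_arcs R))" using R(2) N unfolding d_def by simp
  moreover have "d / 2 \<le> d - k" using d by simp
  ultimately have "S / 2 * (d / 2) ^ (k - 1) \<le> card (unit_arcs R) * (d - k) ^ (k - 1)"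
    using d by (intro mult_mono power_mono) auto
  also have "\<dots> \<le> card (unit_chain_set k R)"
    using card_unit_chain_set_ge_min_degree[OF fin_R R(3), of k k] d k by simp
  also have "\<dots> \<le> card (unit_chain_set k P)"
    using card_unit_chain_set_mono[OF fin R(1)] by simp
  finally have "S / 2 * (d / 2) ^ (k - 1) \<le> card (unit_chain_set k P)" .
  moreover have "S / 2 * (d / 2) ^ (k - 1) = S ^ k / (2 * (8 * N) ^ (k - 1))"
  proof -
    have "S ^ k = S * S ^ (k - 1)" using k by (simp flip: power_Suc)
    then show ?thesis unfolding d_def using N by (simp add: power_divide field_simps)
  qed
  ultimately show ?thesis unfolding S_def N_def by simp
qed

lemma card_unit_pairs_le_unit_arcs:
  assumes "finite P"
  shows "unit_pairs P \<le> card (unit_arcs P)"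
proof -
  have "{{p, q} | p q. p \<in> P \<and> q \<in> P \<and> dist p q = 1} = (\<lambda>(p, q). {p, q}) ` unit_arcs P"
    unfolding unit_arcs_def by auto
  then show ?thesis unfolding unit_pairs_def by (simp add: card_image_le finite_unit_arcs assms)
qed

lemma card_unit_chain_set_collinear_ge:
  fixes v :: "'a::real_normed_vector"
  assumes v: "norm v = 1"
  shows "n - k \<le> card (unit_chain_set k ((\<lambda>i. real i *\<^sub>R v) ` {..<n}))"
proof -
  define pt where "pt i = real i *\<^sub>R v" for i
  have dist_pt: "dist (pt i) (pt j) = \<bar>real i - real j\<bar>" for i j
    unfolding pt_def dist_norm using v by (simp flip: scaleR_diff_left)
  have inj_pt: "inj pt"
  proof (rule injI)
    fix i j assume "pt i = pt j"
    then have "dist (pt i) (pt j) = 0" by simp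
    then show "i = j" unfolding dist_pt by simp
  qed
  define ch where "ch j = map (\<lambda>i. pt (j + i)) [0..<k+1]" for j
  have ch: "ch j \<in> unit_chain_set k (pt ` {..<n})" if j: "j < n - k" for j
  proof -
    have "distinct (ch j)"
      unfolding ch_def distinct_map by (auto simp: inj_on_def inj_eq[OF inj_pt] simp del: upt_Suc)
    moreover have "unit_path (ch j)" unfolding unit_path_iff_nth
    proof (intro allI impI)
      fix t assume "t + 1 < length (ch j)"
      then have "ch j ! t = pt (j + t)" "ch j ! (t + 1) = pt (j + t + 1)"
        unfolding ch_def by (simp_all add: nth_map_upt del: upt_Suc)
      then show "dist (ch j ! t) (ch j ! (t + 1)) = 1" by (simp add: dist_pt)
    qed
    moreover have "length (ch j) = k + 1" "set (ch j) \<subseteq> pt ` {..<n}"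
      unfolding ch_def using j by auto
    ultimately show ?thesis unfolding unit_chain_set_def by blast
  qed
  have "inj_on ch {..<n - k}"
  proof (rule inj_onI)
    fix i j assume "ch i = ch j"
    then have "hd (ch i) = hd (ch j)" by simp
    then show "i = j" unfolding ch_def by (simp add: upt_conv_Cons inj_eq[OF inj_pt] del: upt_Suc)
  qed
  then have "n - k = card (ch ` {..<n - k})" by (simp add: card_image)
  also have "\<dots> \<le> card (unit_chain_set k (pt ` {..<n}))"
    using ch by (intro card_mono finite_unit_chain_set) auto
  finally show ?thesis unfolding pt_def .
qed

lemma C3_ge_linear:
  assumes "k < n"
  shows "n - k \<le> C3 k n"
proof -
  have "n - k \<le> card (unit_chain_set k ((\<lambda>i. real i *\<^sub>R axis 1 1) ` {..<n} :: pt3 set))"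
    by (rule card_unit_chain_set_collinear_ge) (simp add: norm_axis_1)
  also have "\<dots> \<le> C3 k n"
    unfolding unit_chains_eq_card[symmetric]
    by (rule unit_chains_le_C3) (use card_image_le[of "{..<n}" "\<lambda>i. real i *\<^sub>R axis 1 1 :: pt3"] in auto)
  finally show ?thesis .
qed

lemma C3_ge_u3_power:
  assumes k: "k \<ge> 1" and n: "2 * k + 1 \<le> n"
  shows "real (u3 n) ^ k / real n ^ (k - 1) / (2 * (8 * real k) ^ k) \<le> C3 k n"
proof -
  obtain P where P: "finite P" "card P = n" "unit_pairs P = u3 n" by (rule u3_attained)
  define M where "M = real (u3 n)"
  define S where "S = real (card (unit_arcs P))"
  define K where "K = (8 * real k) ^ k"
  have M: "0 \<le> M" "M \<le> S"
    unfolding M_def S_def using card_unit_pairs_le_unit_arcs[OF P(1)] P(3) by auto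
  have n_pos: "real n > 0" using n by simp
  have K_pos: "K > 0" unfolding K_def using k by simp
  have "M ^ k / real n ^ (k - 1) / (2 * K) \<le> C3 k n"
  proof (cases "8 * k * n \<le> card (unit_arcs P)")
    case True
    have "8 ^ (k - 1) \<le> K"
      unfolding K_def using k by (intro order_trans[OF power_increasing[of "k - 1" k]] power_mono) auto
    have "M ^ k / real n ^ (k - 1) / (2 * K) = M ^ k / (2 * K * real n ^ (k - 1))"
      by (simp add: mult_ac)
    also have "\<dots> \<le> S ^ k / (2 * 8 ^ (k - 1) * real n ^ (k - 1))"
      using M n_pos \<open>8 ^ (k - 1) \<le> K\<close> by (intro frac_le power_mono) auto
    also have "\<dots> = S ^ k / (2 * (8 * real n) ^ (k - 1))"
      by (simp add: power_mult_distrib mult_ac)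
    also have "\<dots> \<le> card (unit_chain_set k P)"
      using card_unit_chain_set_ge_arcs_power[OF P(1) _ k] True P(2) n unfolding S_def by force
    also have "\<dots> \<le> C3 k n"
      using unit_chains_le_C3[OF P(1), of n k] P(2) by (simp add: unit_chains_eq_card)
    finally show ?thesis .
  next
    case False
    then have "real (card (unit_arcs P)) \<le> real (8 * k * n)" by (simp only: of_nat_le_iff)
    then have "M ^ k \<le> (8 * k * real n) ^ k"
      using M by (intro power_mono) (auto simp: S_def)
    also have "\<dots> = K * real n * real n ^ (k - 1)"
      unfolding K_def using k by (simp add: power_mult_distrib flip: power_Suc)
    finally have "M ^ k / real n ^ (k - 1) \<le> K * real n"
      using n_pos by (simp add: pos_divide_le_eq)
    then have "M ^ k / real n ^ (k - 1) / (2 * K) \<le> K * real n / (2 * K)"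
      using K_pos by (intro divide_right_mono) auto
    also have "\<dots> = real n / 2" using K_pos by simp
    also have "\<dots> \<le> C3 k n"
      using C3_ge_linear[of k n] n by linarith
    finally show ?thesis .
  qed
  then show ?thesis unfolding M_def K_def .
qed

lemma C3_bigomega_u3:
  assumes "k \<ge> 1"
  shows "(\<lambda>n. real (C3 k n)) \<in> \<Omega>(\<lambda>n. real (u3 n) ^ k / real n ^ (k - 1))"
proof (rule landau_omega.bigI)
  show "1 / (2 * (8 * real k) ^ k) > 0" using assms by simp
  show "\<forall>\<^sub>F n in at_top. 1 / (2 * (8 * real k) ^ k) * norm (real (u3 n) ^ k / real n ^ (k - 1))
      \<le> norm (real (C3 k n))"
    using eventually_ge_at_top[of "2 * k + 1"]
  proof eventually_elim
    fix n assume n: "2 * k + 1 \<le> n"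
    have "1 / (2 * (8 * real k) ^ k) * norm (real (u3 n) ^ k / real n ^ (k - 1))
      = real (u3 n) ^ k / real n ^ (k - 1) / (2 * (8 * real k) ^ k)" by simp
    with C3_ge_u3_power[OF assms n] show "1 / (2 * (8 * real k) ^ k) * norm (real (u3 n) ^ k / real n ^ (k - 1))
      \<le> norm (real (C3 k n))" by (simp add: mult.commute)
  qed
qed

section \<open>Hub chains\<close>

definition unit_incidences :: "'a::metric_space set \<Rightarrow> 'a set \<Rightarrow> ('a \<times> 'a) set" where
  "unit_incidences X Y = {(x, y). x \<in> X \<and> y \<in> Y \<and> dist x y = 1}"

lemma finite_unit_incidences: "finite X \<Longrightarrow> finite Y \<Longrightarrow> finite (unit_incidences X Y)"
  by (rule finite_subset[of _ "X \<times> Y"]) (auto simp: unit_incidences_def)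

fun hub_walks :: "(nat \<Rightarrow> 'a) \<Rightarrow> (nat \<Rightarrow> 'a set) \<Rightarrow> nat \<Rightarrow> 'a list set" where
  "hub_walks a G 0 = {[]}"
| "hub_walks a G (Suc j) = (\<lambda>(w, z). w @ [a j, z]) ` (hub_walks a G j \<times> G (Suc j))"

locale hub_chain =
  fixes a :: "nat \<Rightarrow> 'a::metric_space" and G :: "nat \<Rightarrow> 'a set" and m :: nat
  assumes inj_hub: "inj a"
    and hub_notin: "\<And>i i'. a i \<notin> G i'"
    and disjoint_G: "\<And>i i'. i \<noteq> i' \<Longrightarrow> G i \<inter> G i' = {}"
    and finite_G: "\<And>i. finite (G i)"
    and card_G: "\<And>i. card (G i) = m"
    and dist_hub_G: "\<And>i z. z \<in> G (Suc i) \<Longrightarrow> dist (a i) z = 1"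
    and dist_G_hub: "\<And>i z. z \<in> G (Suc i) \<Longrightarrow> dist z (a (Suc i)) = 1"
begin

lemma hub_walk_props:
  "w \<in> hub_walks a G j \<Longrightarrow> length w = 2 * j \<and> set w \<subseteq> a ` {..<j} \<union> (\<Union>i\<in>{1..j}. G i)
     \<and> distinct w \<and> unit_path w \<and> (j \<ge> 1 \<longrightarrow> last w \<in> G j \<and> hd w = a 0)"
proof (induction j arbitrary: w)
  case (Suc j)
  then obtain v z where w: "w = v @ [a j, z]" and v: "v \<in> hub_walks a G j" and z: "z \<in> G (Suc j)"
    by auto
  have IH: "length v = 2 * j" "set v \<subseteq> a ` {..<j} \<union> (\<Union>i\<in>{1..j}. G i)" "distinct v"
    "unit_path v" "j \<ge> 1 \<Longrightarrow> last v \<in> G j \<and> hd v = a 0"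
    using Suc.IH[OF v] by auto
  have "z \<notin> G i" if "i \<in> {1..j}" for i using disjoint_G[of i "Suc j"] z that by auto
  then have "z \<notin> set v" using IH(2) hub_notin z by blast
  moreover have "a j \<notin> set v" using IH(2) hub_notin inj_hub by (auto simp: inj_eq)
  moreover have "z \<noteq> a j" using hub_notin z by auto
  ultimately have dist: "distinct w" using IH(3) w by auto
  have "dist (last v) (a j) = 1" if "v \<noteq> []"
    using that IH(1,5) dist_G_hub[where i = "j - 1"] by (cases j) auto
  then have path: "unit_path w"
    unfolding w unit_path_append using IH(4) dist_hub_G[OF z] by auto
  have ends: "last w \<in> G (Suc j)" "hd w = a 0"
    using w z IH(1,5) by (cases j; auto simp: hd_append)+
  have "z \<in> (\<Union>i\<in>{1..Suc j}. G i)" using z by force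
  then have set: "set w \<subseteq> a ` {..<Suc j} \<union> (\<Union>i\<in>{1..Suc j}. G i)"
    using IH(2) w by fastforce
  have len: "length w = 2 * Suc j" using IH(1) w by simp
  show ?case using len set dist path ends by (intro conjI impI)
qed simp

lemma finite_hub_walks: "finite (hub_walks a G j)"
  by (induction j) (simp_all add: finite_G)

lemma card_hub_walks: "card (hub_walks a G j) = m ^ j"
proof (induction j)
  case (Suc j)
  have "inj_on (\<lambda>(w, z). w @ [a j, z]) (hub_walks a G j \<times> G (Suc j))"
    by (auto simp: inj_on_def)
  then show ?case using Suc finite_G card_G finite_hub_walks
    by (simp add: card_image card_cartesian_product)
qed simp

lemma not_in_hub_walk:
  assumes "w \<in> hub_walks a G l" "z \<notin> a ` {..<l}" "\<And>i. i \<in> {1..l} \<Longrightarrow> z \<notin> G i"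
  shows "z \<notin> set w"
proof
  assume "z \<in> set w"
  then have "z \<in> a ` {..<l} \<or> (\<exists>i\<in>{1..l}. z \<in> G i)"
    using hub_walk_props[OF assms(1)] by blast
  then show False using assms(2,3) by blast
qed

text \<open>Chains \<open>x, y, a 0, z\<^sub>1, \<dots>, a (l - 1), z\<^sub>l\<close> for each incidence \<open>(x, y)\<close> with \<open>y\<close> at
  unit distance from \<open>a 0\<close>.\<close>

lemma card_incidences_mult_le_unit_chains:
  assumes l: "l \<ge> 1" and fin: "finite P"
    and sub: "X \<union> Y \<union> a ` {..<l} \<union> (\<Union>i\<in>{1..l}. G i) \<subseteq> P"
    and Y: "\<And>y. y \<in> Y \<Longrightarrow> dist y (a 0) = 1"
    and avoid: "\<And>x. x \<in> X \<union> Y \<Longrightarrow> x \<notin> a ` {1..<l} \<and> x \<notin> (\<Union>i\<in>{1..l}. G i)"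
  shows "card {(x, y) \<in> unit_incidences X Y. x \<noteq> a 0} * m ^ l
    \<le> card (unit_chain_set (2 * l + 1) P)"
proof -
  define A where "A = {(x, y) \<in> unit_incidences X Y. x \<noteq> a 0}"
  define f where "f = (\<lambda>((x, y), w). x # y # w :: 'a list)"
  have hubs: "{..<l} = insert 0 {1..<l}" using l by auto
  have fresh: "z \<notin> set w" if "w \<in> hub_walks a G l" "z \<in> X \<union> Y" "z \<noteq> a 0" for z w
  proof (rule not_in_hub_walk[OF that(1)])
    show "z \<notin> a ` {..<l}" using avoid[OF that(2)] that(3) hubs by auto
    show "z \<notin> G i" if "i \<in> {1..l}" for i using avoid[OF \<open>z \<in> X \<union> Y\<close>] that by blast
  qed
  have "f ` (A \<times> hub_walks a G l) \<subseteq> unit_chain_set (2 * l + 1) P"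
  proof clarify
    fix x y w assume xy: "(x, y) \<in> A" and w: "w \<in> hub_walks a G l"
    have W: "length w = 2 * l" "set w \<subseteq> a ` {..<l} \<union> (\<Union>i\<in>{1..l}. G i)" "distinct w"
      "unit_path w" "hd w = a 0"
      using hub_walk_props[OF w] l by auto
    have x: "x \<in> X" "y \<in> Y" "dist x y = 1" "x \<noteq> a 0"
      using xy unfolding A_def unit_incidences_def by auto
    have "y \<noteq> a 0" using Y[OF x(2)] by auto
    then have "distinct (x # y # w)" using W(3) x fresh[OF w] by auto
    moreover have "unit_path ([x, y] @ w)"
      unfolding unit_path_append using W(4,5) x(3) Y[OF x(2)] by simp
    moreover have "set w \<subseteq> P" using W(2) sub by blast
    then have "set (x # y # w) \<subseteq> P" using sub x(1,2) by auto
    ultimately show "f ((x, y), w) \<in> unit_chain_set (2 * l + 1) P"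
      unfolding unit_chain_set_def f_def using W(1) by simp
  qed
  then have "card (f ` (A \<times> hub_walks a G l)) \<le> card (unit_chain_set (2 * l + 1) P)"
    by (rule card_mono[OF finite_unit_chain_set[OF fin]])
  moreover have "inj_on f (A \<times> hub_walks a G l)" unfolding f_def by (auto simp: inj_on_def)
  ultimately show ?thesis
    unfolding A_def by (simp add: card_image card_cartesian_product card_hub_walks)
qed

text \<open>Chains \<open>s, a 0, z\<^sub>1, \<dots>, a (l - 1), z\<^sub>l, a l\<close> with \<open>s \<in> G 0\<close>.\<close>

lemma power_le_card_unit_chains:
  assumes l: "l \<ge> 1" and fin: "finite P"
    and sub: "a ` {..l} \<union> (\<Union>i\<in>{..l}. G i) \<subseteq> P"
    and G0: "\<And>s. s \<in> G 0 \<Longrightarrow> dist s (a 0) = 1"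
  shows "m ^ (l + 1) \<le> card (unit_chain_set (2 * l + 1) P)"
proof -
  define f where "f = (\<lambda>(s, w). s # w @ [a l])"
  have "f ` (G 0 \<times> hub_walks a G l) \<subseteq> unit_chain_set (2 * l + 1) P"
  proof clarify
    fix s w assume s: "s \<in> G 0" and w: "w \<in> hub_walks a G l"
    have W: "length w = 2 * l" "set w \<subseteq> a ` {..<l} \<union> (\<Union>i\<in>{1..l}. G i)" "distinct w"
      "unit_path w" "last w \<in> G l" "hd w = a 0"
      using hub_walk_props[OF w] l by auto
    have "s \<notin> set w"
    proof (rule not_in_hub_walk[OF w])
      show "s \<notin> a ` {..<l}" using hub_notin s by auto
      show "s \<notin> G i" if "i \<in> {1..l}" for i using disjoint_G[of 0 i] s that by auto
    qed
    moreover have "a l \<notin> set w"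
      by (rule not_in_hub_walk[OF w]) (auto simp: inj_eq[OF inj_hub] hub_notin)
    moreover have "s \<noteq> a l" using hub_notin s by auto
    ultimately have "distinct (s # w @ [a l])" using W(3) by auto
    moreover have "w \<noteq> []" using W(1) l by auto
    then have "unit_path ([s] @ w @ [a l])"
      unfolding unit_path_append using W(4,5,6) l G0[OF s] dist_G_hub[where i = "l - 1"] by auto
    moreover have "set w \<subseteq> P"
    proof
      fix z assume "z \<in> set w"
      then have "z \<in> a ` {..<l} \<or> (\<exists>i\<in>{1..l}. z \<in> G i)" using W(2) by blast
      then show "z \<in> P" by (elim disjE bexE) (use sub in auto)
    qed
    then have "set (s # w @ [a l]) \<subseteq> P" using sub s by auto
    ultimately show "f (s, w) \<in> unit_chain_set (2 * l + 1) P"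
      unfolding unit_chain_set_def f_def using W(1) by simp
  qed
  then have "card (f ` (G 0 \<times> hub_walks a G l)) \<le> card (unit_chain_set (2 * l + 1) P)"
    by (rule card_mono[OF finite_unit_chain_set[OF fin]])
  moreover have "inj_on f (G 0 \<times> hub_walks a G l)" unfolding f_def by (auto simp: inj_on_def)
  ultimately show ?thesis by (simp add: card_image card_cartesian_product card_hub_walks card_G)
qed

end

section \<open>Hubs and hub circles in space\<close>

definition e1 :: pt3 where "e1 = axis 1 1"
definition e2 :: pt3 where "e2 = axis 2 1"
definition e3 :: pt3 where "e3 = axis 3 1"

lemma inner_e123: "e1 \<bullet> e1 = 1" "e2 \<bullet> e2 = 1" "e3 \<bullet> e3 = 1"
  "e1 \<bullet> e2 = 0" "e1 \<bullet> e3 = 0" "e2 \<bullet> e3 = 0"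
  "e2 \<bullet> e1 = 0" "e3 \<bullet> e1 = 0" "e3 \<bullet> e2 = 0"
  unfolding e1_def e2_def e3_def by (simp_all add: inner_axis_axis)

lemma dist_eq_1_iff_inner: "dist p q = 1 \<longleftrightarrow> (p - q) \<bullet> (p - q) = 1"
  unfolding dist_norm by (simp add: norm_eq_1)

text \<open>Points of \<open>hub_circle h (Suc i)\<close> are at unit distance from both \<open>hub h i\<close> and
  \<open>hub h (Suc i)\<close>, since the circle lies in the plane bisecting the two hubs.\<close>

definition hub :: "real \<Rightarrow> nat \<Rightarrow> pt3" where
  "hub h i = (real i * h) *\<^sub>R e1"

definition hub_circle :: "real \<Rightarrow> nat \<Rightarrow> pt3 set" where
  "hub_circle h i = {p. p \<bullet> e1 = (real i - 1/2) * h \<and> dist p (hub h i) = 1}"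

lemma dist_hub_eq_1_iff: "dist p (hub h i) = 1 \<longleftrightarrow> p \<bullet> p - 2 * (real i * h) * (p \<bullet> e1) + (real i * h)^2 = 1"
proof -
  have "(p - hub h i) \<bullet> (p - hub h i) = p \<bullet> p - 2 * (real i * h) * (p \<bullet> e1) + (real i * h)^2"
    unfolding hub_def by (simp add: inner_diff_left inner_diff_right inner_e123 inner_commute power2_eq_square)
  then show ?thesis by (simp add: dist_eq_1_iff_inner)
qed

lemma dist_prev_hub: "p \<in> hub_circle h (Suc i) \<Longrightarrow> dist (hub h i) p = 1"
proof -
  assume p: "p \<in> hub_circle h (Suc i)"
  then have a: "p \<bullet> e1 = (real i + 1/2) * h" and b: "p \<bullet> p - 2 * ((real i + 1) * h) * (p \<bullet> e1) + ((real i + 1) * h)^2 = 1"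
    unfolding hub_circle_def dist_hub_eq_1_iff by (auto simp: algebra_simps)
  have "p \<bullet> p - 2 * (real i * h) * (p \<bullet> e1) + (real i * h)^2 = 1"
    using b unfolding a by (simp add: algebra_simps power2_eq_square)
  then show ?thesis using dist_hub_eq_1_iff by (simp add: dist_commute)
qed

lemma infinite_hub_circle:
  assumes h: "0 < h" "h < 1"
  shows "infinite (hub_circle h i)"
proof -
  define \<rho> where "\<rho> = sqrt (1 - h^2/4)"
  have hsq: "h^2 < 1" using mult_strict_mono[of h 1 h 1] h by (simp add: power2_eq_square)
  have \<rho>sq: "\<rho>^2 = 1 - h^2/4" unfolding \<rho>_def using hsq by simp
  have \<rho>pos: "\<rho> > 0" unfolding \<rho>_def using hsq by simp
  define q where "q t = ((real i - 1/2) * h) *\<^sub>R e1 + \<rho> *\<^sub>R (cos t *\<^sub>R e2 + sin t *\<^sub>R e3)" for t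
  have q1: "q t \<bullet> e1 = (real i - 1/2) * h" for t
    unfolding q_def by (simp add: inner_add_left inner_e123)
  have q2: "q t \<bullet> e2 = \<rho> * cos t" for t
    unfolding q_def by (simp add: inner_add_left inner_e123)
  have qq: "q t \<bullet> q t = ((real i - 1/2) * h)^2 + \<rho>^2" for t
  proof -
    define w where "w = cos t *\<^sub>R e2 + sin t *\<^sub>R e3"
    have ww: "w \<bullet> w = 1" unfolding w_def
      by (simp add: inner_add_left inner_add_right inner_e123 sin_cos_squared_add3)
    have we: "w \<bullet> e1 = 0" "e1 \<bullet> w = 0" unfolding w_def by (simp_all add: inner_add_left inner_add_right inner_e123)
    have "q t = ((real i - 1/2) * h) *\<^sub>R e1 + \<rho> *\<^sub>R w" unfolding q_def w_def by simp
    then show ?thesis by (simp add: inner_add_left inner_add_right inner_e123 ww we power2_eq_square)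
  qed
  have inq: "q t \<in> hub_circle h i" for t
  proof -
    have "q t \<bullet> q t - 2 * (real i * h) * (q t \<bullet> e1) + (real i * h)^2 = 1"
      unfolding qq q1 using \<rho>sq by (simp add: algebra_simps power2_eq_square)
    then show ?thesis unfolding hub_circle_def dist_hub_eq_1_iff using q1 by simp
  qed
  have inj: "inj_on q {0..pi}"
  proof (rule inj_onI)
    fix s t assume st: "s \<in> {0..pi}" "t \<in> {0..pi}" "q s = q t"
    then have "\<rho> * cos s = \<rho> * cos t" using q2 by metis
    then have "cos s = cos t" using \<rho>pos by simp
    then show "s = t" using st cos_inj_pi by auto
  qed
  have "infinite {0..pi}" using pi_gt_zero by (simp add: infinite_Icc)
  then have "infinite (q ` {0..pi})" using inj finite_imageD by blast
  moreover have "q ` {0..pi} \<subseteq> hub_circle h i" using inq by auto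
  ultimately show ?thesis using finite_subset by blast
qed

lemma hub_inner_e1: "hub h i \<bullet> e1 = real i * h"
  unfolding hub_def by (simp add: inner_e123)

lemma hub_not_in_hub_circle:
  assumes "h > 0"
  shows "hub h i \<notin> hub_circle h i'"
proof
  assume "hub h i \<in> hub_circle h i'"
  then have "real i * h = (real i' - 1/2) * h" unfolding hub_circle_def by (simp add: hub_inner_e1)
  then have "real i = real i' - 1/2" using assms by simp
  then have "i < i'" "i' < i + 1" by linarith+
  then show False by simp
qed

lemma hub_chain_hub_circles:
  assumes h: "h > 0" and \<Gamma>: "\<And>i. \<Gamma> i \<subseteq> hub_circle h i" "\<And>i. finite (\<Gamma> i)" "\<And>i. card (\<Gamma> i) = m"
  shows "hub_chain (hub h) \<Gamma> m"
proof
  show "inj (hub h)"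
  proof (rule injI)
    fix i j assume "hub h i = hub h j"
    then have "hub h i \<bullet> e1 = hub h j \<bullet> e1" by simp
    then show "i = j" using h by (simp add: hub_inner_e1)
  qed
  show "hub h i \<notin> \<Gamma> i'" for i i' using hub_not_in_hub_circle[OF h] \<Gamma>(1) by blast
  show "\<Gamma> i \<inter> \<Gamma> i' = {}" if "i \<noteq> i'" for i i'
  proof -
    have "hub_circle h i \<inter> hub_circle h i' = {}" unfolding hub_circle_def using that h by auto
    then show ?thesis using \<Gamma>(1)[of i] \<Gamma>(1)[of i'] by blast
  qed
  show "finite (\<Gamma> i)" "card (\<Gamma> i) = m" for i using \<Gamma>(2,3) by auto
  show "dist (hub h i) z = 1" if "z \<in> \<Gamma> (Suc i)" for i z
    using dist_prev_hub \<Gamma>(1) that by blast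
  show "dist z (hub h (Suc i)) = 1" if "z \<in> \<Gamma> (Suc i)" for i z
    using \<Gamma>(1)[of "Suc i"] that unfolding hub_circle_def by blast
qed

lemma exists_hub_circles_avoiding:
  assumes "finite F"
  obtains h \<Gamma> where "0 < h" "h < 1" "\<And>i. i \<in> {1..l} \<Longrightarrow> hub h i \<notin> F"
    "\<And>i. \<Gamma> i \<subseteq> hub_circle h i - F" "\<And>i. finite (\<Gamma> i)" "\<And>i. card (\<Gamma> i) = m"
proof -
  define B where "B = (\<lambda>(p, i). (p \<bullet> e1) / real i) ` (F \<times> {1..l})"
  have "finite B" unfolding B_def using assms by simp
  then have "infinite ({0<..<(1::real)} - B)" by (simp add: infinite_Ioo Diff_infinite_finite)
  then obtain h where h: "h \<in> {0<..<(1::real)}" "h \<notin> B" using infinite_imp_nonempty by blast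
  have hub: "hub h i \<notin> F" if i: "i \<in> {1..l}" for i
  proof
    assume "hub h i \<in> F"
    moreover have "(hub h i \<bullet> e1) / real i = h" using i by (simp add: hub_inner_e1)
    ultimately have "h \<in> B" unfolding B_def using i by (intro image_eqI[of _ _ "(hub h i, i)"]) auto
    with h(2) show False ..
  qed
  have "infinite (hub_circle h i - F)" for i
    using infinite_hub_circle[of h i] h(1) assms by (simp add: Diff_infinite_finite)
  then have "\<exists>S. S \<subseteq> hub_circle h i - F \<and> finite S \<and> card S = m" for i
    by (meson infinite_arbitrarily_large)
  then obtain \<Gamma> where "\<And>i. \<Gamma> i \<subseteq> hub_circle h i - F \<and> finite (\<Gamma> i) \<and> card (\<Gamma> i) = m"
    by metis
  with h hub show thesis by (intro that[of h \<Gamma>]) auto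
qed

lemma exists_hub_configuration:
  fixes X Y :: "pt3 set"
  assumes l: "l \<ge> 1" and fin: "finite X" "finite Y" and Y: "Y \<subseteq> sphere 0 1"
    and card: "card X \<le> m" "card Y \<le> m"
  obtains P :: "pt3 set" where "finite P" "card P \<le> (l + 3) * m + (l + 1)"
    "card {(x, y) \<in> unit_incidences X Y. x \<noteq> 0} * m ^ l \<le> card (unit_chain_set (2 * l + 1) P)"
    "m ^ (l + 1) \<le> card (unit_chain_set (2 * l + 1) P)"
proof -
  obtain h \<Gamma> where h: "0 < h" "h < 1" "\<And>i. i \<in> {1..l} \<Longrightarrow> hub h i \<notin> X \<union> Y"
    and \<Gamma>: "\<And>i. \<Gamma> i \<subseteq> hub_circle h i - (X \<union> Y)" "\<And>i. finite (\<Gamma> i)" "\<And>i. card (\<Gamma> i) = m"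
    using exists_hub_circles_avoiding[of "X \<union> Y" l m] fin by blast
  interpret hub_chain "hub h" \<Gamma> m
    by (rule hub_chain_hub_circles) (use h(1) \<Gamma> in auto)
  have hub0: "hub h 0 = 0" by (simp add: hub_def)
  define P where "P = X \<union> Y \<union> hub h ` {..l} \<union> (\<Union>i\<in>{..l}. \<Gamma> i)"
  have "finite P" unfolding P_def using fin \<Gamma>(2) by simp
  have "card P \<le> card (X \<union> Y \<union> hub h ` {..l}) + card (\<Union>i\<in>{..l}. \<Gamma> i)"
    unfolding P_def by (rule card_Un_le)
  also have "card (X \<union> Y \<union> hub h ` {..l}) \<le> card (X \<union> Y) + card (hub h ` {..l})" by (rule card_Un_le)
  also have "card (X \<union> Y) \<le> card X + card Y" by (rule card_Un_le)
  also have "card (hub h ` {..l}) \<le> l + 1" using card_image_le[of "{..l}" "hub h"] by simp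
  also have "card (\<Union>i\<in>{..l}. \<Gamma> i) \<le> (\<Sum>i\<in>{..l}. card (\<Gamma> i))" by (rule card_UN_le) simp
  also have "(\<Sum>i\<in>{..l}. card (\<Gamma> i)) = (l + 1) * m" using \<Gamma>(3) by simp
  finally have card_P: "card P \<le> (l + 3) * m + (l + 1)" using card by (simp add: algebra_simps)
  have incidences: "card {(x, y) \<in> unit_incidences X Y. x \<noteq> hub h 0} * m ^ l
      \<le> card (unit_chain_set (2 * l + 1) P)"
  proof (rule card_incidences_mult_le_unit_chains[OF l \<open>finite P\<close>])
    show "X \<union> Y \<union> hub h ` {..<l} \<union> (\<Union>i\<in>{1..l}. \<Gamma> i) \<subseteq> P" unfolding P_def by auto
    show "dist y (hub h 0) = 1" if "y \<in> Y" for y using that Y hub0 by (auto simp: dist_norm)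
    show "x \<notin> hub h ` {1..<l} \<and> x \<notin> (\<Union>i\<in>{1..l}. \<Gamma> i)" if "x \<in> X \<union> Y" for x
      using h(3) \<Gamma>(1) that by fastforce
  qed
  have power: "m ^ (l + 1) \<le> card (unit_chain_set (2 * l + 1) P)"
  proof (rule power_le_card_unit_chains[OF l \<open>finite P\<close>])
    show "hub h ` {..l} \<union> (\<Union>i\<in>{..l}. \<Gamma> i) \<subseteq> P" unfolding P_def by auto
    show "dist s (hub h 0) = 1" if "s \<in> \<Gamma> 0" for s
      using \<Gamma>(1)[of 0] that unfolding hub_circle_def by blast
  qed
  show thesis using that[OF \<open>finite P\<close> card_P] incidences power hub0 by simp
qed

section \<open>Keeping the points of largest degree\<close>

lemma sum_remove_min_ge:
  fixes w :: "'a \<Rightarrow> real"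
  assumes "finite A" "a \<in> A" "\<And>b. b \<in> A \<Longrightarrow> w a \<le> w b"
  shows "(real (card A) - 1) * sum w A \<le> card A * sum w (A - {a})"
proof -
  have "real (card (A - {a})) * w a \<le> sum w (A - {a})"
    using sum_mono[of "A - {a}" "\<lambda>_. w a" w] assms(3) by simp
  moreover have "sum w A = sum w (A - {a}) + w a" using assms(1,2) by (simp add: sum.remove)
  moreover have "card A > 0" using assms(1,2) card_gt_0_iff by blast
  then have "real (card (A - {a})) = real (card A) - 1"
    using assms(2) by (simp add: of_nat_diff)
  ultimately show ?thesis by (simp add: algebra_simps)
qed

lemma exists_subset_card_eq_sum_ge:
  fixes w :: "'a \<Rightarrow> real"
  assumes "finite A" "m \<le> card A"
  shows "\<exists>B\<subseteq>A. card B = m \<and> m * sum w A \<le> card A * sum w B"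
  using assms
proof (induction "card A" arbitrary: A rule: less_induct)
  case less
  consider "m = 0" | "card A = m" | "0 < m" "m < card A" using less.prems(2) by linarith
  then show ?case
  proof cases
    case 1
    then show ?thesis by (intro exI[of _ "{}"]) auto
  next
    case 2
    then show ?thesis by (intro exI[of _ A]) (auto simp: mult.commute)
  next
    case 3
    then have "A \<noteq> {}" by auto
    define a where "a = arg_min_on w A"
    have a: "a \<in> A" "\<And>b. b \<in> A \<Longrightarrow> w a \<le> w b"
      using arg_min_if_finite[OF less.prems(1) \<open>A \<noteq> {}\<close>] unfolding a_def by (meson not_less)+
    have "\<exists>B\<subseteq>A - {a}. card B = m \<and> m * sum w (A - {a}) \<le> card (A - {a}) * sum w B"
      using less.hyps[of "A - {a}"] less.prems(1) a(1) 3 by (simp add: card_Diff1_less)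
    then obtain B where B: "B \<subseteq> A - {a}" "card B = m" "m * sum w (A - {a}) \<le> card (A - {a}) * sum w B"
      by blast
    define N where "N = real (card A)"
    have N: "real (card (A - {a})) = N - 1" "N - 1 > 0"
      unfolding N_def using a(1) less.prems(1) 3 by (simp_all add: of_nat_diff)
    have "(N - 1) * (m * sum w A) = m * ((N - 1) * sum w A)" by (simp only: ac_simps)
    also have "\<dots> \<le> m * (N * sum w (A - {a}))"
      using sum_remove_min_ge[of A a w, OF less.prems(1) a] unfolding N_def by (intro mult_left_mono) auto
    also have "\<dots> = N * (m * sum w (A - {a}))" by (simp only: ac_simps)
    also have "\<dots> \<le> N * ((N - 1) * sum w B)"
      using B(3) N(1) unfolding N_def by (intro mult_left_mono) auto
    also have "\<dots> = (N - 1) * (N * sum w B)" by (simp only: ac_simps)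
    finally have "m * sum w A \<le> N * sum w B" using N(2) by (rule mult_left_le_imp_le)
    with B show ?thesis unfolding N_def by blast
  qed
qed

lemma exists_subset_card_le_sum_ge:
  fixes w :: "'a \<Rightarrow> real"
  assumes "finite A" "card A \<le> n" "m \<le> n" "\<And>a. a \<in> A \<Longrightarrow> w a \<ge> 0"
  shows "\<exists>B\<subseteq>A. card B \<le> m \<and> m * sum w A \<le> n * sum w B"
proof (cases "card A \<le> m")
  case True
  have "m * sum w A \<le> n * sum w A" using assms(3,4) by (simp add: mult_right_mono sum_nonneg)
  with True show ?thesis by auto
next
  case False
  obtain B where B: "B \<subseteq> A" "card B = m" "m * sum w A \<le> card A * sum w B"
    using exists_subset_card_eq_sum_ge[OF assms(1), of m w] False by auto
  have "card A * sum w B \<le> n * sum w B"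
    using assms(2,4) B(1) by (intro mult_right_mono) (auto intro: sum_nonneg)
  then have "m * sum w A \<le> n * sum w B" using B(3) by linarith
  with B(1,2) show ?thesis by blast
qed

lemma card_unit_incidences_eq_sum_fst:
  "finite X \<Longrightarrow> finite Y \<Longrightarrow> card (unit_incidences X Y) = (\<Sum>x\<in>X. card {y \<in> Y. dist x y = 1})"
proof -
  assume "finite X" "finite Y"
  have "unit_incidences X Y = Sigma X (\<lambda>x. {y \<in> Y. dist x y = 1})"
    unfolding unit_incidences_def by auto
  then show ?thesis using \<open>finite X\<close> \<open>finite Y\<close> by (simp add: card_SigmaI)
qed

lemma card_unit_incidences_eq_sum_snd:
  "finite X \<Longrightarrow> finite Y \<Longrightarrow> card (unit_incidences X Y) = (\<Sum>y\<in>Y. card {x \<in> X. dist x y = 1})"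
proof -
  assume "finite X" "finite Y"
  have "unit_incidences X Y = prod.swap ` Sigma Y (\<lambda>y. {x \<in> X. dist x y = 1})"
    unfolding unit_incidences_def by force
  then have "card (unit_incidences X Y) = card (Sigma Y (\<lambda>y. {x \<in> X. dist x y = 1}))"
    by (simp add: card_image)
  then show ?thesis using \<open>finite X\<close> \<open>finite Y\<close> by (simp add: card_SigmaI)
qed

text \<open>Keep the \<open>m\<close> points of \<open>X\<close> of largest degree, then the \<open>m\<close> points of \<open>Y\<close> of largest
  degree into the retained part of \<open>X\<close>.\<close>

lemma exists_small_subsets_unit_incidences:
  assumes fin: "finite X" "finite Y" and card: "card X \<le> n" "card Y \<le> n" and "m \<le> n"
  obtains X' Y' where "X' \<subseteq> X" "Y' \<subseteq> Y" "card X' \<le> m" "card Y' \<le> m"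
    "real m ^ 2 * card (unit_incidences X Y) \<le> real n ^ 2 * card (unit_incidences X' Y')"
proof -
  define degY where "degY x = real (card {y \<in> Y. dist x y = 1})" for x
  have "\<exists>X'\<subseteq>X. card X' \<le> m \<and> m * sum degY X \<le> n * sum degY X'"
    by (rule exists_subset_card_le_sum_ge[OF fin(1) card(1) \<open>m \<le> n\<close>]) (simp add: degY_def)
  then obtain X' where X': "X' \<subseteq> X" "card X' \<le> m" "m * sum degY X \<le> n * sum degY X'"
    by blast
  have fin_X': "finite X'" using X'(1) fin(1) by (rule finite_subset)
  have "real (card (unit_incidences X Y)) = sum degY X"
    unfolding degY_def card_unit_incidences_eq_sum_fst[OF fin] by simp
  moreover have "real (card (unit_incidences X' Y)) = sum degY X'"
    unfolding degY_def card_unit_incidences_eq_sum_fst[OF fin_X' fin(2)] by simp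
  ultimately have step1: "real m * card (unit_incidences X Y) \<le> real n * card (unit_incidences X' Y)"
    using X'(3) by simp
  define degX' where "degX' y = real (card {x \<in> X'. dist x y = 1})" for y
  have "\<exists>Y'\<subseteq>Y. card Y' \<le> m \<and> m * sum degX' Y \<le> n * sum degX' Y'"
    by (rule exists_subset_card_le_sum_ge[OF fin(2) card(2) \<open>m \<le> n\<close>]) (simp add: degX'_def)
  then obtain Y' where Y': "Y' \<subseteq> Y" "card Y' \<le> m" "m * sum degX' Y \<le> n * sum degX' Y'"
    by blast
  have fin_Y': "finite Y'" using Y'(1) fin(2) by (rule finite_subset)
  have "real (card (unit_incidences X' Y)) = sum degX' Y"
    unfolding degX'_def card_unit_incidences_eq_sum_snd[OF fin_X' fin(2)] by simp
  moreover have "real (card (unit_incidences X' Y')) = sum degX' Y'"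
    unfolding degX'_def card_unit_incidences_eq_sum_snd[OF fin_X' fin_Y'] by simp
  ultimately have step2: "real m * card (unit_incidences X' Y) \<le> real n * card (unit_incidences X' Y')"
    using Y'(3) by simp
  have "real m ^ 2 * card (unit_incidences X Y) = real m * (real m * card (unit_incidences X Y))"
    by (simp add: power2_eq_square)
  also have "\<dots> \<le> real m * (real n * card (unit_incidences X' Y))"
    using step1 by (rule mult_left_mono) simp
  also have "\<dots> = real n * (real m * card (unit_incidences X' Y))" by simp
  also have "\<dots> \<le> real n * (real n * card (unit_incidences X' Y'))"
    using step2 by (rule mult_left_mono) simp
  also have "\<dots> = real n ^ 2 * card (unit_incidences X' Y')" by (simp add: power2_eq_square)
  finally show thesis using that[OF X'(1) Y'(1) X'(2) Y'(2)] by blast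
qed

section \<open>Moving incidences to the unit sphere\<close>

lemma card_le_mult_card_image:
  assumes "finite A" and fibre: "\<And>z. z \<in> f ` A \<Longrightarrow> card {a \<in> A. f a = z} \<le> K"
  shows "card A \<le> K * card (f ` A)"
proof -
  have "A = (\<Union>z\<in>f ` A. {a \<in> A. f a = z})" by auto
  then have "card A \<le> (\<Sum>z\<in>f ` A. card {a \<in> A. f a = z})"
    using card_UN_le[of "f ` A" "\<lambda>z. {a \<in> A. f a = z}"] \<open>finite A\<close> by simp
  also have "\<dots> \<le> (\<Sum>z\<in>f ` A. K)" by (rule sum_mono) (rule fibre)
  finally show ?thesis by (simp add: mult.commute)
qed

lemma card_le_mult_card_unit_incidences_image:
  assumes fin: "finite X" "finite Y" and A: "A \<subseteq> unit_incidences X Y"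
    and unit: "\<And>x y. (x, y) \<in> A \<Longrightarrow> dist (f x) (g y) = 1"
    and fibre: "\<And>x y. (x, y) \<in> A \<Longrightarrow> card {(x', y') \<in> A. f x' = f x \<and> g y' = g y} \<le> K"
  shows "card A \<le> K * card (unit_incidences (f ` X) (g ` Y))"
proof -
  define F where "F = (\<lambda>(x, y). (f x, g y))"
  have "finite A" using A finite_unit_incidences[OF fin] by (rule finite_subset)
  then have "card A \<le> K * card (F ` A)"
  proof (rule card_le_mult_card_image)
    fix z assume "z \<in> F ` A"
    then obtain x y where xy: "(x, y) \<in> A" "z = (f x, g y)" unfolding F_def by auto
    have "{a \<in> A. F a = z} = {(x', y') \<in> A. f x' = f x \<and> g y' = g y}" unfolding F_def xy by auto
    then show "card {a \<in> A. F a = z} \<le> K" using fibre[OF xy(1)] by simp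
  qed
  also have "card (F ` A) \<le> card (unit_incidences (f ` X) (g ` Y))"
  proof (rule card_mono)
    show "finite (unit_incidences (f ` X) (g ` Y))" using fin by (simp add: finite_unit_incidences)
    show "F ` A \<subseteq> unit_incidences (f ` X) (g ` Y)"
      using A unit unfolding F_def unit_incidences_def by auto
  qed
  finally show ?thesis by simp
qed

lemma card_unit_incidences_translate:
  fixes c :: "'a::real_normed_vector"
  shows "card (unit_incidences ((\<lambda>x. x - c) ` X) ((\<lambda>y. y - c) ` Y)) = card (unit_incidences X Y)"
proof -
  have "unit_incidences ((\<lambda>x. x - c) ` X) ((\<lambda>y. y - c) ` Y)
      = (\<lambda>(x, y). (x - c, y - c)) ` unit_incidences X Y"
    unfolding unit_incidences_def by (auto simp: dist_norm image_iff)
  moreover have "inj (\<lambda>(x, y). (x - c :: 'a, y - c))" by (auto simp: inj_def)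
  ultimately show ?thesis by (simp add: card_image inj_on_subset)
qed

lemma finite_card_line_unit_dist:
  fixes p w y :: "'a::real_inner"
  assumes "w \<noteq> 0"
  shows "finite {x. \<exists>t. x = p + t *\<^sub>R w \<and> dist x y = 1}"
    and "card {x. \<exists>t. x = p + t *\<^sub>R w \<and> dist x y = 1} \<le> 2"
proof -
  define a where "a = w \<bullet> w"
  define b where "b = 2 * (w \<bullet> (p - y))"
  define c where "c = (p - y) \<bullet> (p - y) - 1"
  have a0: "a \<noteq> 0" unfolding a_def using assms by simp
  define r1 where "r1 = (- b + sqrt (discrim a b c)) / (2 * a)"
  define r2 where "r2 = (- b - sqrt (discrim a b c)) / (2 * a)"
  have sub: "{x. \<exists>t. x = p + t *\<^sub>R w \<and> dist x y = 1} \<subseteq> (\<lambda>t. p + t *\<^sub>R w) ` {r1, r2}"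
  proof
    fix x assume "x \<in> {x. \<exists>t. x = p + t *\<^sub>R w \<and> dist x y = 1}"
    then obtain t where t: "x = p + t *\<^sub>R w" "dist x y = 1" by auto
    have "(x - y) \<bullet> (x - y) = 1" using t(2) unfolding dist_norm by (simp add: norm_eq_1)
    moreover have "x - y = (p - y) + t *\<^sub>R w" using t(1) by simp
    ultimately have "(p - y) \<bullet> (p - y) + 2 * t * (w \<bullet> (p - y)) + t * t * (w \<bullet> w) = 1"
      by (simp add: inner_add_left inner_add_right inner_commute algebra_simps)
    then have "a * t\<^sup>2 + b * t + c = 0" unfolding a_def b_def c_def by (simp add: power2_eq_square algebra_simps)
    then have "t = r1 \<or> t = r2" using discriminant_iff[OF a0] unfolding r1_def r2_def by blast
    then show "x \<in> (\<lambda>t. p + t *\<^sub>R w) ` {r1, r2}" using t(1) by auto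
  qed
  then show "finite {x. \<exists>t. x = p + t *\<^sub>R w \<and> dist x y = 1}" by (rule finite_subset) simp
  have "card ((\<lambda>t. p + t *\<^sub>R w) ` {r1, r2}) \<le> 2"
    using card_image_le[of "{r1, r2}" "\<lambda>t. p + t *\<^sub>R w"] card_insert_le_m1[of 1 "{r2}" r1]
    by (auto simp: card_insert_if)
  with sub show "card {x. \<exists>t. x = p + t *\<^sub>R w \<and> dist x y = 1} \<le> 2"
    by (meson card_mono finite_imageI finite.emptyI finite_insert order_trans)
qed

lemma inner_eq_of_unit_dist_sphere:
  fixes x y :: "'a::real_inner"
  assumes "y \<in> sphere 0 r" "dist x y = 1"
  shows "y \<bullet> y = r\<^sup>2" "2 * (x \<bullet> y) = x \<bullet> x + r\<^sup>2 - 1"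
proof -
  show yy: "y \<bullet> y = r\<^sup>2" using assms(1) by (simp add: dot_square_norm)
  have "(x - y) \<bullet> (x - y) = 1" using assms(2) by (simp add: dist_norm norm_eq_1)
  then show "2 * (x \<bullet> y) = x \<bullet> x + r\<^sup>2 - 1"
    using yy by (simp add: inner_diff_left inner_diff_right inner_commute)
qed

text \<open>After rescaling by \<open>1 / r\<close>, the circle \<open>sphere 0 r \<inter> sphere x 1\<close> is cut out of the unit
  sphere by the plane \<open>2 * (x \<bullet> z) = (x \<bullet> x + r\<^sup>2 - 1) / r\<close>; unless this plane passes through
  \<open>0\<close>, it is also cut out by the unit sphere around \<open>unit_apex r x\<close>.\<close>

definition unit_apex :: "real \<Rightarrow> 'a::real_inner \<Rightarrow> 'a" where
  "unit_apex r x = ((x \<bullet> x + r\<^sup>2 - 1) / (r * (x \<bullet> x))) *\<^sub>R x"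

lemma unit_apex_nonzero:
  fixes x y :: "'a::real_inner"
  assumes y: "y \<in> sphere 0 r" and xy: "dist x y = 1" and r: "r > 0" and T: "x \<bullet> x + r\<^sup>2 \<noteq> 1"
  shows "x \<noteq> 0" "unit_apex r x \<noteq> 0"
proof -
  show "x \<noteq> 0"
  proof
    assume "x = 0"
    with y xy r have "r = 1" by simp
    with T \<open>x = 0\<close> show False by simp
  qed
  with r T show "unit_apex r x \<noteq> 0" unfolding unit_apex_def by simp
qed

lemma on_line_unit_apex:
  assumes "unit_apex r x \<noteq> 0"
  obtains t where "x = t *\<^sub>R unit_apex r x"
proof -
  define \<mu> where "\<mu> = (x \<bullet> x + r\<^sup>2 - 1) / (r * (x \<bullet> x))"
  have apex: "unit_apex r x = \<mu> *\<^sub>R x" unfolding unit_apex_def \<mu>_def ..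
  with assms have "\<mu> \<noteq> 0" by auto
  with apex have "x = (1 / \<mu>) *\<^sub>R unit_apex r x" by simp
  then show thesis by (rule that)
qed

lemma dist_unit_apex:
  fixes x y :: "'a::real_inner"
  assumes y: "y \<in> sphere 0 r" and xy: "dist x y = 1" and r: "r > 0" and T: "x \<bullet> x + r\<^sup>2 \<noteq> 1"
  shows "dist (unit_apex r x) ((1 / r) *\<^sub>R y) = 1"
proof -
  define q where "q = x \<bullet> x"
  define T where "T = q + r\<^sup>2 - 1"
  have yy: "y \<bullet> y = r\<^sup>2" and xy2: "2 * (x \<bullet> y) = T"
    using inner_eq_of_unit_dist_sphere[OF y xy] unfolding T_def q_def by auto
  have q: "q \<noteq> 0" unfolding q_def using unit_apex_nonzero(1)[OF assms] by simp
  define l where "l = T / (r * q)"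
  have "(l *\<^sub>R x - (1 / r) *\<^sub>R y) \<bullet> (l *\<^sub>R x - (1 / r) *\<^sub>R y)
      = l\<^sup>2 * q - 2 * (l / r) * (x \<bullet> y) + (y \<bullet> y) / r\<^sup>2"
    unfolding q_def by (simp add: inner_diff_left inner_diff_right inner_commute power2_eq_square algebra_simps)
  also have "\<dots> = (l\<^sup>2 * q - (l / r) * T) + 1" using xy2 yy r by (simp add: algebra_simps)
  also have "l\<^sup>2 * q - (l / r) * T = 0" unfolding l_def using q r by (simp add: power2_eq_square field_simps)
  finally show ?thesis
    unfolding unit_apex_def dist_norm q_def[symmetric] T_def[symmetric] l_def[symmetric]
    by (simp add: norm_eq_1)
qed

lemma card_incidences_off_great_circle:
  fixes X Y :: "'a::real_inner set"
  assumes fin: "finite X" "finite Y" and Y: "Y \<subseteq> sphere 0 r" and r: "r > 0"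
  shows "card {(x, y) \<in> unit_incidences X Y. x \<bullet> x + r\<^sup>2 \<noteq> 1}
    \<le> 2 * card (unit_incidences (unit_apex r ` X) ((\<lambda>y. (1 / r) *\<^sub>R y) ` Y))"
proof -
  define A where "A = {(x, y) \<in> unit_incidences X Y. x \<bullet> x + r\<^sup>2 \<noteq> 1}"
  have mem: "y \<in> sphere 0 r" "dist x y = 1" "x \<bullet> x + r\<^sup>2 \<noteq> 1" if "(x, y) \<in> A" for x y
    using that Y unfolding A_def unit_incidences_def by auto
  have "card A \<le> 2 * card (unit_incidences (unit_apex r ` X) ((\<lambda>y. (1 / r) *\<^sub>R y) ` Y))"
  proof (rule card_le_mult_card_unit_incidences_image[OF fin])
    show "A \<subseteq> unit_incidences X Y" unfolding A_def by auto
    show "dist (unit_apex r x) ((1 / r) *\<^sub>R y) = 1" if "(x, y) \<in> A" for x y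
      using dist_unit_apex[OF mem(1,2)[OF that] r mem(3)[OF that]] .
    show "card {(x', y') \<in> A. unit_apex r x' = unit_apex r x \<and> (1 / r) *\<^sub>R y' = (1 / r) *\<^sub>R y} \<le> 2"
      if xy: "(x, y) \<in> A" for x y
    proof -
      define S where "S = {z. \<exists>t. z = 0 + t *\<^sub>R unit_apex r x \<and> dist z y = 1}"
      have apex: "unit_apex r x \<noteq> 0" using unit_apex_nonzero(2)[OF mem(1,2)[OF xy] r mem(3)[OF xy]] .
      then have S: "finite S" "card S \<le> 2" unfolding S_def by (rule finite_card_line_unit_dist)+
      have "{(x', y') \<in> A. unit_apex r x' = unit_apex r x \<and> (1 / r) *\<^sub>R y' = (1 / r) *\<^sub>R y}
          \<subseteq> (\<lambda>z. (z, y)) ` S"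
      proof
        fix z assume "z \<in> {(x', y') \<in> A. unit_apex r x' = unit_apex r x \<and> (1 / r) *\<^sub>R y' = (1 / r) *\<^sub>R y}"
        then obtain x' y' where z: "z = (x', y')" "(x', y') \<in> A" "unit_apex r x' = unit_apex r x"
          "(1 / r) *\<^sub>R y' = (1 / r) *\<^sub>R y" by blast
        obtain t where "x' = t *\<^sub>R unit_apex r x"
          using on_line_unit_apex[of r x'] apex unfolding z(3) by metis
        moreover have "y' = y" using z(4) r by simp
        ultimately show "z \<in> (\<lambda>z. (z, y)) ` S" unfolding S_def z(1) using mem(2)[OF z(2)] by auto
      qed
      then show ?thesis
        using S card_image_le[of S "\<lambda>z. (z, y)"] card_mono[OF finite_imageI[OF S(1)]] by fastforce
    qed
  qed
  then show ?thesis unfolding A_def .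
qed

text \<open>For \<open>e \<bullet> e = 1\<close>, \<open>perp_sphere_point e\<close> maps the unit sphere into itself, identifying
  antipodes, and sends the great circle orthogonal to \<open>u\<close> into the unit sphere around
  \<open>perp_point e u\<close>.\<close>

definition perp_point :: "'a::real_inner \<Rightarrow> 'a \<Rightarrow> 'a" where
  "perp_point e u = (-2 * (e \<bullet> u) / (u \<bullet> u)) *\<^sub>R (u - (2 * (e \<bullet> u)) *\<^sub>R e)"

definition perp_sphere_point :: "'a::real_inner \<Rightarrow> 'a \<Rightarrow> 'a" where
  "perp_sphere_point e v = (1 / (v \<bullet> v)) *\<^sub>R ((2 * (e \<bullet> v)) *\<^sub>R v + (v \<bullet> v - 4 * (e \<bullet> v)^2) *\<^sub>R e)"

lemma inner_perp_numerator:
  assumes ee: "e \<bullet> e = 1"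
  shows "((2 * s) *\<^sub>R v + (V - 4 * s^2) *\<^sub>R e) \<bullet> ((2 * s) *\<^sub>R v + (V - 4 * s^2) *\<^sub>R e)
    = 4 * s^2 * (v \<bullet> v) + 4 * s * (V - 4 * s^2) * (e \<bullet> v) + (V - 4 * s^2)^2"
  using ee by (simp add: inner_add_left inner_add_right inner_commute power2_eq_square algebra_simps)

lemma inner_perp_sphere_point:
  assumes ee: "e \<bullet> e = 1" and v: "v \<noteq> 0"
  shows "perp_sphere_point e v \<bullet> perp_sphere_point e v = 1"
proof -
  define s where "s = e \<bullet> v"
  define V where "V = v \<bullet> v"
  have V0: "V \<noteq> 0" unfolding V_def using v by simp
  have "((2 * s) *\<^sub>R v + (V - 4 * s^2) *\<^sub>R e) \<bullet> ((2 * s) *\<^sub>R v + (V - 4 * s^2) *\<^sub>R e) = V^2"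
    unfolding inner_perp_numerator[OF ee] unfolding s_def V_def by (simp add: power2_eq_square algebra_simps)
  then show ?thesis unfolding perp_sphere_point_def s_def[symmetric] V_def[symmetric] using V0
    by (simp add: power2_eq_square)
qed

lemma inner_diff_perp_points:
  assumes ee: "e \<bullet> e = 1" and u: "u \<noteq> 0" and v: "v \<noteq> 0" and uv: "u \<bullet> v = 0"
  shows "(perp_point e u - perp_sphere_point e v) \<bullet> (perp_point e u - perp_sphere_point e v) = 1"
proof -
  define g where "g = e \<bullet> u"
  define q where "q = u \<bullet> u"
  define s where "s = e \<bullet> v"
  define V where "V = v \<bullet> v"
  define a where "a = -2 * g / q"
  define P where "P = u - (2 * g) *\<^sub>R e"
  define W where "W = (2 * s) *\<^sub>R v + (V - 4 * s^2) *\<^sub>R e"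
  have q0: "q \<noteq> 0" unfolding q_def using u by simp
  have V0: "V \<noteq> 0" unfolding V_def using v by simp
  have F: "perp_point e u = a *\<^sub>R P" unfolding perp_point_def a_def P_def g_def q_def by simp
  have G: "perp_sphere_point e v = (1 / V) *\<^sub>R W" unfolding perp_sphere_point_def W_def s_def V_def by simp
  have PP: "P \<bullet> P = q" unfolding P_def q_def g_def using ee
    by (simp add: inner_diff_left inner_diff_right inner_commute power2_eq_square algebra_simps)
  have PW: "P \<bullet> W = - g * V" unfolding P_def W_def g_def V_def s_def using ee uv
    by (simp add: inner_diff_left inner_add_right inner_commute power2_eq_square algebra_simps)
  have GG: "perp_sphere_point e v \<bullet> perp_sphere_point e v = 1" by (rule inner_perp_sphere_point[OF ee v])
  have FF: "perp_point e u \<bullet> perp_point e u = 4 * g^2 / q" unfolding F PP[symmetric] using PP q0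
    by (simp add: a_def power2_eq_square field_simps)
  have FG: "perp_point e u \<bullet> perp_sphere_point e v = 2 * g^2 / q" unfolding F G using PW V0 q0
    by (simp add: a_def power2_eq_square field_simps)
  have "(perp_point e u - perp_sphere_point e v) \<bullet> (perp_point e u - perp_sphere_point e v) = perp_point e u \<bullet> perp_point e u - 2 * (perp_point e u \<bullet> perp_sphere_point e v) + perp_sphere_point e v \<bullet> perp_sphere_point e v"
    by (simp add: inner_diff_left inner_diff_right inner_commute)
  then show ?thesis using FF FG GG by simp
qed

lemma eq_or_eq_neg_if_scaleR_eq:
  fixes u v :: "'a::real_vector"
  assumes "a *\<^sub>R u = b *\<^sub>R v" "a\<^sup>2 = b\<^sup>2" "a \<noteq> 0"
  shows "v = u \<or> v = - u"
proof -
  from assms(2) have "b = a \<or> b = - a" by (auto simp: power2_eq_iff)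
  then show ?thesis
  proof
    assume "b = a"
    with assms(1,3) show ?thesis by simp
  next
    assume "b = - a"
    with assms(1) have "a *\<^sub>R u = a *\<^sub>R (- v)" by simp
    with assms(3) have "u = - v" by (metis scaleR_cancel_left)
    then show ?thesis by simp
  qed
qed

lemma perp_sphere_point_eq_imp:
  assumes e: "e \<bullet> e = 1" and norm: "v1 \<bullet> v1 = v2 \<bullet> v2" and "v1 \<noteq> 0" "e \<bullet> v1 \<noteq> 0"
    and eq: "perp_sphere_point e v1 = perp_sphere_point e v2"
  shows "v2 = v1 \<or> v2 = - v1"
proof -
  define V where "V = v1 \<bullet> v1"
  have "V \<noteq> 0" unfolding V_def using \<open>v1 \<noteq> 0\<close> by simp
  define W where "W v = (2 * (e \<bullet> v)) *\<^sub>R v + (V - 4 * (e \<bullet> v)\<^sup>2) *\<^sub>R e" for v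
  have W: "W v = V *\<^sub>R perp_sphere_point e v" if "v \<bullet> v = V" for v
    unfolding W_def perp_sphere_point_def that using \<open>V \<noteq> 0\<close> by simp
  have "W v1 = W v2" using W[of v1] W[of v2] eq norm unfolding V_def by simp
  moreover have "e \<bullet> W v = V - 2 * (e \<bullet> v)\<^sup>2" for v
    unfolding W_def using e by (simp add: inner_add_right power2_eq_square)
  ultimately have sq: "(e \<bullet> v1)\<^sup>2 = (e \<bullet> v2)\<^sup>2" by (metis diff_left_imp_eq mult_left_cancel zero_neq_numeral)
  with \<open>W v1 = W v2\<close> have "2 *\<^sub>R ((e \<bullet> v1) *\<^sub>R v1) = 2 *\<^sub>R ((e \<bullet> v2) *\<^sub>R v2)" unfolding W_def by simp
  then have "(e \<bullet> v1) *\<^sub>R v1 = (e \<bullet> v2) *\<^sub>R v2" by (metis scaleR_cancel_left zero_neq_numeral)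
  then show ?thesis using sq \<open>e \<bullet> v1 \<noteq> 0\<close> by (rule eq_or_eq_neg_if_scaleR_eq)
qed

lemma perp_point_eq_imp:
  assumes e: "e \<bullet> e = 1" and norm: "u1 \<bullet> u1 = u2 \<bullet> u2" and "u1 \<noteq> 0" "e \<bullet> u1 \<noteq> 0"
    and eq: "perp_point e u1 = perp_point e u2"
  shows "u2 = u1 \<or> u2 = - u1"
proof -
  define q where "q = u1 \<bullet> u1"
  have "q \<noteq> 0" unfolding q_def using \<open>u1 \<noteq> 0\<close> by simp
  have expand: "q *\<^sub>R perp_point e u = (-2 * (e \<bullet> u)) *\<^sub>R u + (4 * (e \<bullet> u)\<^sup>2) *\<^sub>R e"
    if "u \<bullet> u = q" for u
    unfolding perp_point_def that using \<open>q \<noteq> 0\<close> by (simp add: scaleR_diff_right power2_eq_square algebra_simps)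
  have "e \<bullet> (q *\<^sub>R perp_point e u) = 2 * (e \<bullet> u)\<^sup>2" if "u \<bullet> u = q" for u
    unfolding expand[OF that] using e by (simp add: inner_add_right inner_diff_right inner_commute power2_eq_square)
  then have sq: "(e \<bullet> u1)\<^sup>2 = (e \<bullet> u2)\<^sup>2" using eq norm unfolding q_def by (metis mult_left_cancel zero_neq_numeral)
  have "(-2) *\<^sub>R ((e \<bullet> u1) *\<^sub>R u1) = (-2) *\<^sub>R ((e \<bullet> u2) *\<^sub>R u2)"
    using expand[of u1] expand[of u2] eq norm sq unfolding q_def by simp
  then have "(e \<bullet> u1) *\<^sub>R u1 = (e \<bullet> u2) *\<^sub>R u2" by (metis scaleR_cancel_left neg_equal_0_iff_equal zero_neq_numeral)
  then show ?thesis using sq \<open>e \<bullet> u1 \<noteq> 0\<close> by (rule eq_or_eq_neg_if_scaleR_eq)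
qed

lemma great_circle_incidence:
  fixes x y :: "'a::real_inner"
  assumes y: "y \<in> sphere 0 r" and xy: "dist x y = 1" and great: "x \<bullet> x + r\<^sup>2 = 1"
    and r: "r > 0" "r \<noteq> 1"
  shows "x \<noteq> 0" "y \<noteq> 0" "x \<bullet> y = 0" "y \<bullet> y = r\<^sup>2"
proof -
  from inner_eq_of_unit_dist_sphere[OF y xy] great
  show "y \<bullet> y = r\<^sup>2" "x \<bullet> y = 0" by auto
  then show "y \<noteq> 0" using r by auto
  show "x \<noteq> 0"
  proof
    assume "x = 0"
    with great have "r\<^sup>2 = 1" by simp
    with r show False by (simp add: power2_eq_1_iff)
  qed
qed

lemma card_incidences_on_great_circle:
  fixes X Y :: "'a::real_inner set"
  assumes fin: "finite X" "finite Y" and Y: "Y \<subseteq> sphere 0 r" and r: "r > 0" "r \<noteq> 1"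
    and e: "e \<bullet> e = 1" and eX: "\<And>x. x \<in> X \<Longrightarrow> x \<noteq> 0 \<Longrightarrow> e \<bullet> x \<noteq> 0"
    and eY: "\<And>y. y \<in> Y \<Longrightarrow> e \<bullet> y \<noteq> 0"
  shows "card {(x, y) \<in> unit_incidences X Y. x \<bullet> x + r\<^sup>2 = 1}
    \<le> 4 * card (unit_incidences (perp_point e ` X) (perp_sphere_point e ` Y))"
proof -
  define A where "A = {(x, y) \<in> unit_incidences X Y. x \<bullet> x + r\<^sup>2 = 1}"
  have mem: "x \<in> X" "y \<in> Y" "dist x y = 1" "x \<bullet> x = 1 - r\<^sup>2" if "(x, y) \<in> A" for x y
    using that unfolding A_def unit_incidences_def by auto
  have great: "x \<noteq> 0" "y \<noteq> 0" "x \<bullet> y = 0" "y \<bullet> y = r\<^sup>2" if "(x, y) \<in> A" for x y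
    using great_circle_incidence[of y r x] mem[OF that] Y r by auto
  have "card A \<le> 4 * card (unit_incidences (perp_point e ` X) (perp_sphere_point e ` Y))"
  proof (rule card_le_mult_card_unit_incidences_image[OF fin])
    show "A \<subseteq> unit_incidences X Y" unfolding A_def by auto
    show "dist (perp_point e x) (perp_sphere_point e y) = 1" if "(x, y) \<in> A" for x y
      using inner_diff_perp_points[OF e great(1-3)[OF that]] by (simp add: dist_norm norm_eq_1)
    show "card {(x', y') \<in> A. perp_point e x' = perp_point e x \<and> perp_sphere_point e y' = perp_sphere_point e y}
        \<le> 4" if xy: "(x, y) \<in> A" for x y
    proof -
      have "{(x', y') \<in> A. perp_point e x' = perp_point e x \<and> perp_sphere_point e y' = perp_sphere_point e y}
          \<subseteq> {x, - x} \<times> {y, - y}"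
      proof
        fix z assume "z \<in> {(x', y') \<in> A. perp_point e x' = perp_point e x
          \<and> perp_sphere_point e y' = perp_sphere_point e y}"
        then obtain x' y' where z: "z = (x', y')" and x'y': "(x', y') \<in> A"
          and eq: "perp_point e x' = perp_point e x" "perp_sphere_point e y' = perp_sphere_point e y"
          by blast
        have "x' = x \<or> x' = - x"
          using perp_point_eq_imp[OF e _ great(1)[OF xy] _ eq(1)[symmetric]] mem[OF xy] mem[OF x'y'] great(1)[OF xy] eX
          by simp
        moreover have "y' = y \<or> y' = - y"
          using perp_sphere_point_eq_imp[OF e _ great(2)[OF xy] _ eq(2)[symmetric]] mem[OF xy] great(4)[OF xy]
            great(4)[OF x'y'] eY
          by simp
        ultimately show "z \<in> {x, - x} \<times> {y, - y}" unfolding z by auto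
      qed
      moreover have "card {x, - x} \<le> 2" "card {y, - y} \<le> 2"
        by (cases "x = - x", simp_all) (cases "y = - y", simp_all)
      then have "card ({x, - x} \<times> {y, - y}) \<le> 4"
        unfolding card_cartesian_product using mult_le_mono by fastforce
      ultimately show ?thesis by (meson card_mono finite.emptyI finite_SigmaI finite_insert order_trans)
    qed
  qed
  then show ?thesis unfolding A_def .
qed

lemma exists_unit_vector_inner_nonzero:
  assumes "finite W" "0 \<notin> W"
  obtains e :: pt3 where "e \<bullet> e = 1" "\<And>w. w \<in> W \<Longrightarrow> e \<bullet> w \<noteq> 0"
proof -
  define pw where "pw w = [: w \<bullet> e1, w \<bullet> e2, w \<bullet> e3 :]" for w
  have "pw w \<noteq> 0" if "w \<in> W" for w
  proof
    assume "pw w = 0"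
    then have "w \<bullet> e1 = 0" "w \<bullet> e2 = 0" "w \<bullet> e3 = 0" unfolding pw_def by (auto simp: pCons_eq_0_iff)
    then have "w = 0" unfolding e1_def e2_def e3_def inner_axis by (simp add: vec_eq_iff forall_3)
    with that assms(2) show False by simp
  qed
  then have "finite (\<Union>w\<in>W. {t. poly (pw w) t = 0})" using assms(1) poly_roots_finite by blast
  then obtain t where t: "t \<notin> (\<Union>w\<in>W. {t. poly (pw w) t = 0})"
    using infinite_UNIV_char_0 ex_new_if_finite by blast
  define p where "p = e1 + t *\<^sub>R e2 + (t * t) *\<^sub>R e3"
  have p: "p \<bullet> w = poly (pw w) t" for w
    unfolding p_def pw_def by (simp add: inner_add_left inner_commute algebra_simps)
  have "p \<bullet> e1 = 1" unfolding p_def by (simp add: inner_add_left inner_e123)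
  then have "p \<noteq> 0" by auto
  show thesis
  proof (rule that[of "(1 / norm p) *\<^sub>R p"])
    show "(1 / norm p) *\<^sub>R p \<bullet> (1 / norm p) *\<^sub>R p = 1"
      using \<open>p \<noteq> 0\<close> by (simp add: dot_square_norm power2_eq_square)
    show "(1 / norm p) *\<^sub>R p \<bullet> w \<noteq> 0" if "w \<in> W" for w
      using t that \<open>p \<noteq> 0\<close> p[of w] by auto
  qed
qed

text \<open>Incidence circles \<open>sphere 0 r \<inter> sphere x 1\<close> that are not great circles are handled by
  \<open>unit_apex\<close>, great circles by \<open>perp_point\<close>.\<close>

lemma exists_unit_sphere_incidences_centred:
  fixes X Y :: "pt3 set"
  assumes fin: "finite X" "finite Y" and Y: "Y \<subseteq> sphere 0 r" and r: "r > 0"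
  obtains X' Y' :: "pt3 set" where "finite X'" "finite Y'" "card X' \<le> card X" "card Y' \<le> card Y"
    "Y' \<subseteq> sphere 0 1" "card (unit_incidences X Y) \<le> 8 * card (unit_incidences X' Y')"
proof -
  define A0 where "A0 = {(x, y) \<in> unit_incidences X Y. x \<bullet> x + r\<^sup>2 = 1}"
  define A1 where "A1 = {(x, y) \<in> unit_incidences X Y. x \<bullet> x + r\<^sup>2 \<noteq> 1}"
  have "unit_incidences X Y = A0 \<union> A1" "A0 \<inter> A1 = {}" unfolding A0_def A1_def by auto
  moreover have "finite A0" "finite A1"
    unfolding A0_def A1_def by (auto intro: rev_finite_subset[OF finite_unit_incidences[OF fin]])
  ultimately have split: "card (unit_incidences X Y) = card A0 + card A1" by (simp add: card_Un_disjoint)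
  have card_image: "card (f ` X) \<le> card X" "card (g ` Y) \<le> card Y" for f g :: "pt3 \<Rightarrow> pt3"
    using fin by (simp_all add: card_image_le)
  consider "r = 1" | "r \<noteq> 1" "card A0 \<le> card A1" | "r \<noteq> 1" "card A1 < card A0" by linarith
  then show thesis
  proof cases
    case 1
    then show thesis using that[OF fin] Y by simp
  next
    case 2
    have "card A1 \<le> 2 * card (unit_incidences (unit_apex r ` X) ((\<lambda>y. (1 / r) *\<^sub>R y) ` Y))"
      unfolding A1_def by (rule card_incidences_off_great_circle[OF fin Y r])
    moreover have "(\<lambda>y. (1 / r) *\<^sub>R y) ` Y \<subseteq> sphere 0 1" using Y r by auto
    ultimately show thesis
      using that[of "unit_apex r ` X" "(\<lambda>y. (1 / r) *\<^sub>R y) ` Y"] fin card_image split 2 by simp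
  next
    case 3
    have "0 \<notin> (X - {0}) \<union> Y" using Y r by auto
    then obtain e where e: "e \<bullet> e = 1" "\<And>w. w \<in> (X - {0}) \<union> Y \<Longrightarrow> e \<bullet> w \<noteq> 0"
      using exists_unit_vector_inner_nonzero fin by (metis finite_Diff finite_UnI)
    have "card A0 \<le> 4 * card (unit_incidences (perp_point e ` X) (perp_sphere_point e ` Y))"
      unfolding A0_def by (rule card_incidences_on_great_circle[OF fin Y r \<open>r \<noteq> 1\<close> e(1)]) (use e(2) in auto)
    moreover have "perp_sphere_point e ` Y \<subseteq> sphere 0 1"
      using inner_perp_sphere_point[OF e(1)] Y r by (force simp: norm_eq_1)
    ultimately show thesis
      using that[of "perp_point e ` X" "perp_sphere_point e ` Y"] fin card_image split 3 by simp
  qed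
qed

lemma exists_unit_sphere_incidences:
  fixes X Y :: "pt3 set"
  assumes fin: "finite X" "finite Y" and Y: "Y \<subseteq> sphere c r" and r: "r > 0"
  obtains X' Y' :: "pt3 set" where "finite X'" "finite Y'" "card X' \<le> card X" "card Y' \<le> card Y"
    "Y' \<subseteq> sphere 0 1" "card (unit_incidences X Y) \<le> 8 * card (unit_incidences X' Y')"
proof -
  define X0 where "X0 = (\<lambda>x. x - c) ` X"
  define Y0 where "Y0 = (\<lambda>y. y - c) ` Y"
  have fin0: "finite X0" "finite Y0" and card0: "card X0 \<le> card X" "card Y0 \<le> card Y"
    unfolding X0_def Y0_def using fin by (auto intro: card_image_le)
  have "Y0 \<subseteq> sphere 0 r" unfolding Y0_def using Y by (auto simp: dist_norm norm_minus_commute)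
  then obtain X' Y' :: "pt3 set" where X'Y': "finite X'" "finite Y'" "card X' \<le> card X0" "card Y' \<le> card Y0"
    "Y' \<subseteq> sphere 0 1" "card (unit_incidences X0 Y0) \<le> 8 * card (unit_incidences X' Y')"
    using exists_unit_sphere_incidences_centred[OF fin0 _ r] by blast
  moreover have "card (unit_incidences X0 Y0) = card (unit_incidences X Y)"
    unfolding X0_def Y0_def by (rule card_unit_incidences_translate)
  ultimately show thesis using that[of X' Y'] card0 by simp
qed

lemma bip_unit_pairs_eq_card: "bip_unit_pairs X Y = card (unit_incidences X Y)"
  unfolding bip_unit_pairs_def unit_incidences_def by simp

lemma card_unit_incidences_le:
  assumes "finite X" "finite Y"
  shows "card (unit_incidences X Y) \<le> card {(x, y) \<in> unit_incidences X Y. x \<noteq> c} + card Y"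
proof -
  have "unit_incidences X Y \<subseteq> {(x, y) \<in> unit_incidences X Y. x \<noteq> c} \<union> {c} \<times> Y"
    unfolding unit_incidences_def by auto
  moreover have "finite {(x, y) \<in> unit_incidences X Y. x \<noteq> c}"
    by (rule rev_finite_subset[OF finite_unit_incidences[OF assms]]) auto
  ultimately have "card (unit_incidences X Y) \<le> card ({(x, y) \<in> unit_incidences X Y. x \<noteq> c} \<union> {c} \<times> Y)"
    using assms(2) by (intro card_mono) auto
  also have "\<dots> \<le> card {(x, y) \<in> unit_incidences X Y. x \<noteq> c} + card ({c} \<times> Y)"
    by (rule card_Un_le)
  finally show ?thesis by (simp add: card_cartesian_product_singleton)
qed

text \<open>The at most \<open>m\<close> incidences with \<open>x = 0\<close>, the first hub, are paid for by the \<open>m\<^bsup>l + 1\<^esup>\<close>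
  chains \<open>s, 0, z\<^sub>1, \<dots>, z\<^sub>l, a\<^sub>l\<close>.\<close>

lemma C3_ge_unit_sphere_incidences:
  fixes X Y :: "pt3 set"
  assumes l: "l \<ge> 1" and fin: "finite X" "finite Y" and Y: "Y \<subseteq> sphere 0 1"
    and card: "card X \<le> m" "card Y \<le> m" and n: "(l + 3) * m + (l + 1) \<le> n"
  shows "card (unit_incidences X Y) * m ^ l \<le> 2 * C3 (2 * l + 1) n"
proof -
  obtain P :: "pt3 set" where P: "finite P" "card P \<le> (l + 3) * m + (l + 1)"
    "card {(x, y) \<in> unit_incidences X Y. x \<noteq> 0} * m ^ l \<le> card (unit_chain_set (2 * l + 1) P)"
    "m ^ (l + 1) \<le> card (unit_chain_set (2 * l + 1) P)"
    using exists_hub_configuration[OF l fin Y card] .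
  have C3: "card (unit_chain_set (2 * l + 1) P) \<le> C3 (2 * l + 1) n"
    using unit_chains_le_C3[OF P(1), of n] P(2) n by (simp add: unit_chains_eq_card)
  have "card (unit_incidences X Y) \<le> card {(x, y) \<in> unit_incidences X Y. x \<noteq> 0} + m"
    using card_unit_incidences_le[OF fin, of 0] card(2) by linarith
  then have "card (unit_incidences X Y) * m ^ l \<le> (card {(x, y) \<in> unit_incidences X Y. x \<noteq> 0} + m) * m ^ l"
    by (rule mult_le_mono1)
  also have "\<dots> = card {(x, y) \<in> unit_incidences X Y. x \<noteq> 0} * m ^ l + m ^ (l + 1)"
    by (simp add: algebra_simps)
  also have "\<dots> \<le> 2 * C3 (2 * l + 1) n" using P(3,4) C3 by linarith
  finally show ?thesis .
qed

text \<open>Normalise the sphere to the unit sphere centred at \<open>0\<close> (losing a factor \<open>8\<close>), keep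
  \<open>m\<close> points on each side (losing a factor \<open>(n / m)\<^sup>2\<close>), and attach the hub configuration.\<close>

lemma us3_mult_power_le_C3:
  assumes l: "l \<ge> 1" and mn: "m \<le> n" "(l + 3) * m + (l + 1) \<le> n"
  shows "real (us3 n) * real m ^ (l + 2) \<le> 16 * real n ^ 2 * C3 (2 * l + 1) n"
proof (cases "us3 n = 0")
  case False
  obtain X Y c r where XY: "finite X" "card X = n" "finite Y" "card Y = n" "r > 0"
    "Y \<subseteq> sphere c r" "bip_unit_pairs X Y = us3 n"
    by (rule us3_attained[OF False])
  obtain X' Y' :: "pt3 set" where N: "finite X'" "finite Y'" "card X' \<le> card X" "card Y' \<le> card Y"
    "Y' \<subseteq> sphere 0 1" "card (unit_incidences X Y) \<le> 8 * card (unit_incidences X' Y')"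
    by (rule exists_unit_sphere_incidences[OF XY(1,3,6,5)])
  obtain X'' Y'' where R: "X'' \<subseteq> X'" "Y'' \<subseteq> Y'" "card X'' \<le> m" "card Y'' \<le> m"
    "real m ^ 2 * card (unit_incidences X' Y') \<le> real n ^ 2 * card (unit_incidences X'' Y'')"
    by (rule exists_small_subsets_unit_incidences[OF N(1,2) N(3,4)[unfolded XY(2,4)] mn(1)])
  have fin'': "finite X''" "finite Y''" using R(1,2) N(1,2) by (auto intro: finite_subset)
  define U where "U = real (us3 n)"
  define K where "K = real (card (unit_incidences X' Y'))"
  define J where "J = real (card (unit_incidences X'' Y''))"
  define C where "C = real (C3 (2 * l + 1) n)"
  define M where "M = real m"
  have "Y'' \<subseteq> sphere 0 1" using R(2) N(5) by (rule order_trans)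
  then have "card (unit_incidences X'' Y'') * m ^ l \<le> 2 * C3 (2 * l + 1) n"
    by (intro C3_ge_unit_sphere_incidences l fin'' R(3,4) mn(2))
  then have J: "J * M ^ l \<le> 2 * C" unfolding J_def M_def C_def
    by (metis of_nat_le_iff of_nat_mult of_nat_power of_nat_numeral)
  have U: "U \<le> 8 * K" using N(6) XY(7) unfolding U_def K_def by (simp add: bip_unit_pairs_eq_card)
  have K: "M ^ 2 * K \<le> real n ^ 2 * J" using R(5) unfolding M_def K_def J_def .
  have "U * M ^ (l + 2) = M ^ l * (M ^ 2 * U)" by (simp add: power_add power2_eq_square mult_ac)
  also have "\<dots> \<le> M ^ l * (M ^ 2 * (8 * K))"
    using U unfolding M_def by (intro mult_left_mono) auto
  also have "\<dots> = 8 * M ^ l * (M ^ 2 * K)" by simp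
  also have "\<dots> \<le> 8 * M ^ l * (real n ^ 2 * J)" using K unfolding M_def by (intro mult_left_mono) auto
  also have "\<dots> = 8 * real n ^ 2 * (J * M ^ l)" by simp
  also have "\<dots> \<le> 8 * real n ^ 2 * (2 * C)" using J by (intro mult_left_mono) auto
  finally show ?thesis unfolding U_def M_def C_def by simp
qed simp

lemma C3_ge_us3_power:
  assumes l: "l \<ge> 1" and n: "2 * (l + 4) * (l + 1) \<le> n"
  shows "real (us3 n) * real n ^ l / (16 * (2 * real (l + 4)) ^ (l + 2)) \<le> C3 (2 * l + 1) n"
proof -
  define q where "q = l + 4"
  define m where "m = n div q"
  have "q * (l + 1) \<le> 2 * q * (l + 1)" by simp
  then have "q * (l + 1) \<le> n" using n unfolding q_def by linarith
  then have m: "l + 1 \<le> m" unfolding m_def q_def by (simp add: less_eq_div_iff_mult_less_eq mult.commute)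
  have "q * m \<le> n" unfolding m_def by simp
  then have mn: "m \<le> n" "(l + 3) * m + (l + 1) \<le> n" using m unfolding q_def by (simp_all add: algebra_simps)
  have "n mod q < q" "q * m + n mod q = n" unfolding m_def q_def by simp_all
  then have "n < q * (m + 1)" by simp
  then have "real n < real q * (real m + 1)" by (metis of_nat_less_iff of_nat_mult of_nat_1 of_nat_add)
  moreover have "real q * (real m + 1) \<le> real q * (2 * real m)" using m by (intro mult_left_mono) auto
  ultimately have "real n / (2 * real q) \<le> real q * (2 * real m) / (2 * real q)"
    by (intro divide_right_mono) auto
  moreover have q: "real q > 0" unfolding q_def by simp
  then have "real q * (2 * real m) / (2 * real q) = real m" by (simp add: field_simps)
  ultimately have m_ge: "real n / (2 * real q) \<le> real m" by simp
  define U where "U = real (us3 n)"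
  define C where "C = real (C3 (2 * l + 1) n)"
  define N where "N = real n"
  have "N ^ 2 * (N ^ l / (2 * q) ^ (l + 2) * U) = (N / (2 * q)) ^ (l + 2) * U"
    by (simp add: power_divide power_add power2_eq_square mult_ac)
  also have "\<dots> \<le> U * real m ^ (l + 2)"
    using m_ge unfolding N_def U_def by (subst mult.commute, intro mult_left_mono power_mono) auto
  also have "\<dots> \<le> N ^ 2 * (16 * C)"
    using us3_mult_power_le_C3[OF l mn] unfolding U_def N_def C_def by simp
  finally have "N ^ 2 * (N ^ l / (2 * q) ^ (l + 2) * U) \<le> N ^ 2 * (16 * C)" .
  moreover have "N ^ 2 > 0" unfolding N_def using n by simp
  ultimately have "N ^ l / (2 * q) ^ (l + 2) * U \<le> 16 * C" by (rule mult_left_le_imp_le)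
  then have "U * N ^ l / (16 * (2 * real q) ^ (l + 2)) \<le> C"
    using q by (simp add: field_simps)
  then show ?thesis unfolding U_def N_def C_def q_def .
qed

lemma C3_bigomega_us3:
  assumes "odd k" "k \<ge> 3"
  shows "(\<lambda>n. real (C3 k n)) \<in> \<Omega>(\<lambda>n. real (us3 n) * real n ^ ((k - 1) div 2))"
proof -
  define l where "l = (k - 1) div 2"
  have k: "k = 2 * l + 1" and l: "l \<ge> 1" unfolding l_def using assms by presburger+
  define D where "D = 16 * (2 * real (l + 4)) ^ (l + 2)"
  show ?thesis
  proof (rule landau_omega.bigI)
    show "1 / D > 0" unfolding D_def by simp
    show "\<forall>\<^sub>F n in at_top. 1 / D * norm (real (us3 n) * real n ^ ((k - 1) div 2)) \<le> norm (real (C3 k n))"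
      using eventually_ge_at_top[of "2 * (l + 4) * (l + 1)"]
    proof eventually_elim
      fix n assume "2 * (l + 4) * (l + 1) \<le> n"
      from C3_ge_us3_power[OF l this]
      show "1 / D * norm (real (us3 n) * real n ^ ((k - 1) div 2)) \<le> norm (real (C3 k n))"
        unfolding D_def[symmetric] l_def[symmetric] k by simp
    qed
  qed
qed

lemma bigomega_max:
  fixes f g h :: "'a \<Rightarrow> real"
  assumes "f \<in> \<Omega>[F](g)" "f \<in> \<Omega>[F](h)"
  shows "f \<in> \<Omega>[F](\<lambda>x. max (g x) (h x))"
proof -
  obtain c1 c2 where c: "c1 > 0" "c2 > 0" "eventually (\<lambda>x. norm (g x) \<le> c1 * norm (f x)) F"
    "eventually (\<lambda>x. norm (h x) \<le> c2 * norm (f x)) F"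
    using assms unfolding bigomega_iff_bigo by (auto elim!: landau_o.bigE)
  have "eventually (\<lambda>x. norm (max (g x) (h x)) \<le> max c1 c2 * norm (f x)) F"
    using c(3,4)
  proof eventually_elim
    case (elim x)
    have "c1 * norm (f x) \<le> max c1 c2 * norm (f x)" "c2 * norm (f x) \<le> max c1 c2 * norm (f x)"
      by (simp_all add: mult_right_mono)
    with elim show ?case by (auto simp: max_def)
  qed
  then have "(\<lambda>x. max (g x) (h x)) \<in> O[F](f)" using c(1) by (intro landau_o.bigI) auto
  then show ?thesis by (simp add: bigomega_iff_bigo)
qed

theorem proposition1p6:
  fixes k :: nat
  assumes "odd k" and "k \<ge> 3"
  shows "(\<lambda>n. real (C3 k n)) \<in>
    \<Omega>(\<lambda>n. max (real (u3 n) ^ k / real n ^ (k - 1))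
                (real (us3 n) * real n ^ ((k - 1) div 2)))"
proof (rule bigomega_max)
  show "(\<lambda>n. real (C3 k n)) \<in> \<Omega>(\<lambda>n. real (u3 n) ^ k / real n ^ (k - 1))"
    using assms(2) by (intro C3_bigomega_u3) simp
  show "(\<lambda>n. real (C3 k n)) \<in> \<Omega>(\<lambda>n. real (us3 n) * real n ^ ((k - 1) div 2))"
    using assms by (rule C3_bigomega_us3)
qed

end
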